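(* For every $2n_1\in\{24,26,28,30,32\}$, every $2n_2\in\{34,36,38\}$ and every integer $s\ge1$, there exist a binary Euclidean formally self-dual LCD $[4sn_1,2sn_1,6]_2$ code and a binary Euclidean formally self-dual LCD $[4sn_2,2sn_2,7]_2$ code. In addition, binary Euclidean formally self-dual LCD $[44s,22s,5]_2$, $[80s,40s,8]_2$ and $[100s,50s,9]_2$ codes exist for every integer $s\ge1$.
   Context: A binary linear code $\mathcal{C}$ is Euclidean LCD if $\mathcal{C}\cap\mathcal{C}^{\perp_E}=\{0\}$, where $\perp_E$ is the dual with respect to $\sum_ix_iy_i$; it is Euclidean formally self-dual if it has the same weight distribution as $\mathcal{C}^{\perp_E}$. $[n,k,d]_2$ denotes length $n$, dimension $k$, minimum distance $d$. *)

theory Defs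
  imports Main
begin

text \<open>Binary vectors of length n are modelled as functions nat => bool that are
False outside {..<n} (True = 1 in GF(2)). Addition in GF(2)^n is pointwise xor.\<close>

definition bvecs :: "nat \<Rightarrow> (nat \<Rightarrow> bool) set" where
  "bvecs n = {x. \<forall>i. n \<le> i \<longrightarrow> \<not> x i}"

definition bzero :: "nat \<Rightarrow> bool" where
  "bzero = (\<lambda>i. False)"

definition badd :: "(nat \<Rightarrow> bool) \<Rightarrow> (nat \<Rightarrow> bool) \<Rightarrow> (nat \<Rightarrow> bool)" where
  "badd x y = (\<lambda>i. x i \<noteq> y i)"

text \<open>Binary linear code of length n: a subspace of GF(2)^n (over GF(2),
closure under addition and containing 0 suffices).\<close>
definition binary_linear_code :: "nat \<Rightarrow> (nat \<Rightarrow> bool) set \<Rightarrow> bool" where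
  "binary_linear_code n C \<longleftrightarrow> C \<subseteq> bvecs n \<and> bzero \<in> C \<and>
     (\<forall>x\<in>C. \<forall>y\<in>C. badd x y \<in> C)"

definition wt :: "nat \<Rightarrow> (nat \<Rightarrow> bool) \<Rightarrow> nat" where
  "wt n x = card {i. i < n \<and> x i}"

definition eorth :: "nat \<Rightarrow> (nat \<Rightarrow> bool) \<Rightarrow> (nat \<Rightarrow> bool) \<Rightarrow> bool" where
  "eorth n x y \<longleftrightarrow> even (card {i. i < n \<and> x i \<and> y i})"

definition edual :: "nat \<Rightarrow> (nat \<Rightarrow> bool) set \<Rightarrow> (nat \<Rightarrow> bool) set" where
  "edual n C = {y \<in> bvecs n. \<forall>x\<in>C. eorth n x y}"

text \<open>Minimum distance d: minimum weight of a nonzero codeword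
(equivalent to minimum Hamming distance for linear codes).\<close>
definition min_dist :: "nat \<Rightarrow> (nat \<Rightarrow> bool) set \<Rightarrow> nat" where
  "min_dist n C = Min (wt n ` (C - {bzero}))"

definition is_code_nkd :: "nat \<Rightarrow> nat \<Rightarrow> nat \<Rightarrow> (nat \<Rightarrow> bool) set \<Rightarrow> bool" where
  "is_code_nkd n k d C \<longleftrightarrow> binary_linear_code n C \<and> card C = 2 ^ k  \<comment> \<open>dimension k over GF(2)\<close> \<and>
     C - {bzero} \<noteq> {} \<and> min_dist n C = d"

definition euclidean_LCD :: "nat \<Rightarrow> (nat \<Rightarrow> bool) set \<Rightarrow> bool" where
  "euclidean_LCD n C \<longleftrightarrow> C \<inter> edual n C = {bzero}"

definition euclidean_fsd :: "nat \<Rightarrow> (nat \<Rightarrow> bool) set \<Rightarrow> bool" where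
  "euclidean_fsd n C \<longleftrightarrow>
     (\<forall>w. card {x \<in> C. wt n x = w} = card {x \<in> edual n C. wt n x = w})"

definition fsd_LCD_code_exists :: "nat \<Rightarrow> nat \<Rightarrow> nat \<Rightarrow> bool" where
  "fsd_LCD_code_exists n k d \<longleftrightarrow>
     (\<exists>C. is_code_nkd n k d C \<and> euclidean_LCD n C \<and> euclidean_fsd n C)"

end

theory Submission
  imports Defs
begin

text \<open>For a symmetric \<open>m \<times> m\<close> matrix \<open>A\<close> over GF(2)
  the code \<open>C\<close> generated by \<open>[I | A]\<close> has dual generated by \<open>[A | I]\<close>, which is \<open>C\<close> with its
  two halves swapped; so \<open>C\<close> is formally self-dual, and it is LCD as soon as \<open>I + A\<^sup>2\<close> is
  invertible. For each of the eleven base lengths \<open>2m\<close> an explicit matrix \<open>A\<close> is given with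
  certificates that are checked by evaluation: the inverses of \<open>A\<close> and of \<open>I + A\<^sup>2\<close>, and the
  minimum distance, obtained from the words of \<open>[I | A]\<close> and \<open>[I | A\<^sup>-\<^sup>1]\<close> with information part
  of small weight. A direct sum of codes with the same minimum distance keeps all these properties,
  so \<open>2s\<close> copies of a \<open>[2m, m, d]\<close> code give the required \<open>[4sm, 2sm, d]\<close> code.\<close>

lemma bvecs_eq_image_Pow: "bvecs n = (\<lambda>S i. i \<in> S) ` Pow {..<n}"
proof (intro equalityI subsetI)
  fix x assume "x \<in> bvecs n"
  then have "x = (\<lambda>i. i \<in> {i. i < n \<and> x i})"
    by (auto simp: bvecs_def fun_eq_iff) (meson not_le)
  then show "x \<in> (\<lambda>S i. i \<in> S) ` Pow {..<n}"
    by blast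
qed (auto simp: bvecs_def)

lemma finite_bvecs [simp]: "finite (bvecs n)"
  by (simp add: bvecs_eq_image_Pow)

lemma card_bvecs: "card (bvecs n) = 2 ^ n"
proof -
  have "inj_on (\<lambda>S i. i \<in> S) (Pow {..<n})"
    by (rule inj_onI) (auto simp: fun_eq_iff)
  then show ?thesis
    by (simp add: bvecs_eq_image_Pow card_image card_Pow)
qed

lemma bzero_in_bvecs [simp]: "bzero \<in> bvecs n"
  by (simp add: bvecs_def bzero_def)

lemma badd_in_bvecs: "x \<in> bvecs n \<Longrightarrow> y \<in> bvecs n \<Longrightarrow> badd x y \<in> bvecs n"
  by (simp add: bvecs_def badd_def)

lemma badd_self [simp]: "badd x x = bzero"
  by (simp add: badd_def bzero_def)

lemma wt_bzero [simp]: "wt n bzero = 0"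
  by (simp add: wt_def bzero_def)

lemma wt_pos: "x \<in> bvecs n \<Longrightarrow> x \<noteq> bzero \<Longrightarrow> 0 < wt n x"
  by (auto simp: wt_def bvecs_def bzero_def fun_eq_iff card_gt_0_iff) (meson not_le)

lemma eorth_bzero [simp]: "eorth n bzero y" "eorth n y bzero"
  by (simp_all add: eorth_def bzero_def)

lemma card_less_Suc_conv:
  "card {i::nat. i < Suc m \<and> P i} = card {i. i < m \<and> P i} + of_bool (P m)"
proof -
  have "{i. i < Suc m \<and> P i} = {i. i < m \<and> P i} \<union> (if P m then {m} else {})"
    by (auto simp: less_Suc_eq)
  then show ?thesis
    by simp
qed

lemma card_less_add:
  "card {i::nat. i < n + m \<and> P i} = card {i. i < n \<and> P i} + card {j. j < m \<and> P (n + j)}"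
  by (induction m) (simp_all add: card_less_Suc_conv)

section \<open>Concatenation and direct sums\<close>

definition cat :: "nat \<Rightarrow> (nat \<Rightarrow> bool) \<Rightarrow> (nat \<Rightarrow> bool) \<Rightarrow> nat \<Rightarrow> bool" where
  "cat n x y = (\<lambda>i. if i < n then x i else y (i - n))"

lemma cat_in_bvecs: "y \<in> bvecs m \<Longrightarrow> cat n x y \<in> bvecs (n + m)"
  by (auto simp: bvecs_def cat_def)

lemma cat_eq_cat_iff:
  assumes "x \<in> bvecs n" "x' \<in> bvecs n"
  shows "cat n x y = cat n x' y' \<longleftrightarrow> x = x' \<and> y = y'"
proof
  assume eq: "cat n x y = cat n x' y'"
  have "x i = x' i" for i
    using fun_cong[OF eq, of i] assms by (cases "i < n") (auto simp: bvecs_def cat_def)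
  moreover have "y j = y' j" for j
    using fun_cong[OF eq, of "n + j"] by (simp add: cat_def)
  ultimately show "x = x' \<and> y = y'"
    by auto
qed simp

lemma cat_bzero [simp]: "cat n bzero bzero = bzero"
  by (simp add: bzero_def cat_def fun_eq_iff)

lemma cat_eq_bzero_iff: "x \<in> bvecs n \<Longrightarrow> cat n x y = bzero \<longleftrightarrow> x = bzero \<and> y = bzero"
  by (metis bzero_in_bvecs cat_bzero cat_eq_cat_iff)

lemma bvecs_add_cases:
  assumes "z \<in> bvecs (n + m)"
  obtains x y where "x \<in> bvecs n" "y \<in> bvecs m" "z = cat n x y"
proof
  show "(\<lambda>i. i < n \<and> z i) \<in> bvecs n" "(\<lambda>j. z (n + j)) \<in> bvecs m"
    using assms by (auto simp: bvecs_def)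
  show "z = cat n (\<lambda>i. i < n \<and> z i) (\<lambda>j. z (n + j))"
    by (simp add: cat_def fun_eq_iff)
qed

lemma wt_cat: "wt (n + m) (cat n x y) = wt n x + wt m y"
  unfolding wt_def card_less_add by (simp add: cat_def cong: conj_cong)

lemma eorth_cat: "eorth (n + m) (cat n x y) (cat n x' y') \<longleftrightarrow> (eorth n x x' \<longleftrightarrow> eorth m y y')"
  unfolding eorth_def card_less_add by (simp add: cat_def cong: conj_cong)

lemma badd_cat: "badd (cat n x y) (cat n x' y') = cat n (badd x x') (badd y y')"
  by (simp add: badd_def cat_def fun_eq_iff)

definition dsum :: "nat \<Rightarrow> (nat \<Rightarrow> bool) set \<Rightarrow> (nat \<Rightarrow> bool) set \<Rightarrow> (nat \<Rightarrow> bool) set" where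
  "dsum n C D = (\<lambda>(x, y). cat n x y) ` (C \<times> D)"

lemma mem_dsum_iff: "z \<in> dsum n C D \<longleftrightarrow> (\<exists>x\<in>C. \<exists>y\<in>D. z = cat n x y)"
  by (auto simp: dsum_def)

lemma inj_on_cat: "C \<subseteq> bvecs n \<Longrightarrow> inj_on (\<lambda>(x, y). cat n x y) (C \<times> D)"
  by (rule inj_onI) (auto simp: cat_eq_cat_iff subset_iff)

lemma card_dsum: "C \<subseteq> bvecs n \<Longrightarrow> card (dsum n C D) = card C * card D"
  by (simp add: dsum_def card_image inj_on_cat card_cartesian_product)

lemma binary_linear_code_dsum:
  assumes "binary_linear_code n C" "binary_linear_code m D"
  shows "binary_linear_code (n + m) (dsum n C D)"
proof -
  have "dsum n C D \<subseteq> bvecs (n + m)"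
    using assms by (auto simp: binary_linear_code_def mem_dsum_iff intro!: cat_in_bvecs)
  moreover have "bzero \<in> dsum n C D"
    using assms cat_bzero[of n] unfolding binary_linear_code_def mem_dsum_iff by metis
  moreover have "badd z z' \<in> dsum n C D" if "z \<in> dsum n C D" "z' \<in> dsum n C D" for z z'
    using that assms unfolding binary_linear_code_def mem_dsum_iff by (metis badd_cat)
  ultimately show ?thesis
    by (simp add: binary_linear_code_def)
qed

lemma edual_dsum:
  assumes "bzero \<in> C" "bzero \<in> D"
  shows "edual (n + m) (dsum n C D) = dsum n (edual n C) (edual m D)"
proof (intro equalityI subsetI)
  fix z assume z: "z \<in> edual (n + m) (dsum n C D)"
  then obtain u v where uv: "u \<in> bvecs n" "v \<in> bvecs m" "z = cat n u v"
    by (auto simp: edual_def elim: bvecs_add_cases)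
  have orth: "eorth (n + m) w z" if "w \<in> dsum n C D" for w
    using z that by (simp add: edual_def)
  have "eorth n x u" if "x \<in> C" for x
    using orth[of "cat n x bzero"] that assms uv by (auto simp: mem_dsum_iff eorth_cat)
  moreover have "eorth m y v" if "y \<in> D" for y
    using orth[of "cat n bzero y"] that assms uv by (auto simp: mem_dsum_iff eorth_cat)
  ultimately have "u \<in> edual n C" "v \<in> edual m D"
    using uv by (auto simp: edual_def)
  then show "z \<in> dsum n (edual n C) (edual m D)"
    using uv by (auto simp: mem_dsum_iff)
next
  fix z assume "z \<in> dsum n (edual n C) (edual m D)"
  then show "z \<in> edual (n + m) (dsum n C D)"
    by (auto simp: mem_dsum_iff edual_def eorth_cat intro: cat_in_bvecs)
qed

lemma dsum_Int:
  assumes "C \<subseteq> bvecs n" "C' \<subseteq> bvecs n"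
  shows "dsum n C D \<inter> dsum n C' D' = dsum n (C \<inter> C') (D \<inter> D')"
  using assms by (auto simp: mem_dsum_iff cat_eq_cat_iff subset_iff)

lemma card_dsum_wt:
  assumes "C \<subseteq> bvecs n" "D \<subseteq> bvecs m"
  shows "card {z \<in> dsum n C D. wt (n + m) z = w} =
    (\<Sum>a\<le>w. card {x \<in> C. wt n x = a} * card {y \<in> D. wt m y = w - a})"
proof -
  let ?P = "\<lambda>a. {x \<in> C. wt n x = a} \<times> {y \<in> D. wt m y = w - a}"
  have "{z \<in> dsum n C D. wt (n + m) z = w} = (\<lambda>(x, y). cat n x y) ` (\<Union>a\<le>w. ?P a)"
    by (force simp: dsum_def wt_cat)
  then have "card {z \<in> dsum n C D. wt (n + m) z = w} = card (\<Union>a\<le>w. ?P a)"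
    by (auto intro!: card_image inj_on_subset[OF inj_on_cat[OF assms(1)]])
  also have "\<dots> = (\<Sum>a\<le>w. card (?P a))"
    using finite_subset[OF assms(1) finite_bvecs] finite_subset[OF assms(2) finite_bvecs]
    by (intro card_UN_disjoint) auto
  finally show ?thesis
    by (simp add: card_cartesian_product)
qed

definition fsd_LCD_code :: "nat \<Rightarrow> nat \<Rightarrow> nat \<Rightarrow> (nat \<Rightarrow> bool) set \<Rightarrow> bool" where
  "fsd_LCD_code n k d C \<longleftrightarrow> is_code_nkd n k d C \<and> euclidean_LCD n C \<and> euclidean_fsd n C"

lemma fsd_LCD_code_exists_iff: "fsd_LCD_code_exists n k d \<longleftrightarrow> (\<exists>C. fsd_LCD_code n k d C)"
  by (simp add: fsd_LCD_code_exists_def fsd_LCD_code_def)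

lemma min_dist_eq_iff:
  assumes "C \<subseteq> bvecs n"
  shows "C - {bzero} \<noteq> {} \<and> min_dist n C = d \<longleftrightarrow>
    (\<forall>x\<in>C - {bzero}. d \<le> wt n x) \<and> (\<exists>x\<in>C - {bzero}. wt n x = d)"
proof -
  have fin: "finite (wt n ` (C - {bzero}))"
    using finite_subset[OF assms] by simp
  show ?thesis
  proof (cases "C - {bzero} = {}")
    case False
    then have "wt n ` (C - {bzero}) \<noteq> {}"
      by blast
    then show ?thesis
      unfolding min_dist_def using Min_eq_iff[OF fin] False by (auto simp: image_iff)
  qed auto
qed

lemma min_dist_dsum:
  assumes "binary_linear_code n C" "binary_linear_code m D"
    and "C - {bzero} \<noteq> {}" "min_dist n C = d" "D - {bzero} \<noteq> {}" "min_dist m D = d"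
  shows "dsum n C D - {bzero} \<noteq> {} \<and> min_dist (n + m) (dsum n C D) = d"
proof -
  have C: "C \<subseteq> bvecs n" "bzero \<in> C" and D: "D \<subseteq> bvecs m" "bzero \<in> D"
    using assms(1,2) by (auto simp: binary_linear_code_def)
  have Cd: "\<forall>x\<in>C - {bzero}. d \<le> wt n x" "\<exists>x\<in>C - {bzero}. wt n x = d"
    and Dd: "\<forall>y\<in>D - {bzero}. d \<le> wt m y"
    using assms(3-6) min_dist_eq_iff[OF C(1)] min_dist_eq_iff[OF D(1)] by blast+
  have "d \<le> wt (n + m) z" if z: "z \<in> dsum n C D - {bzero}" for z
  proof -
    obtain x y where xy: "x \<in> C" "y \<in> D" "z = cat n x y"
      using z by (auto simp: mem_dsum_iff)
    then have "x \<noteq> bzero \<or> y \<noteq> bzero"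
      using z by auto
    then show ?thesis
      using xy Cd(1) Dd by (fastforce simp: wt_cat intro: trans_le_add1 trans_le_add2)
  qed
  moreover obtain x0 where "x0 \<in> C - {bzero}" "wt n x0 = d"
    using Cd(2) by blast
  then have "cat n x0 bzero \<in> dsum n C D - {bzero}" "wt (n + m) (cat n x0 bzero) = d"
    using C D by (auto simp: mem_dsum_iff wt_cat cat_eq_bzero_iff subset_iff)
  moreover have "dsum n C D \<subseteq> bvecs (n + m)"
    using binary_linear_code_dsum[OF assms(1,2)] by (simp add: binary_linear_code_def)
  ultimately show ?thesis
    using min_dist_eq_iff by blast
qed

lemma euclidean_LCD_dsum:
  assumes "C \<subseteq> bvecs n" "bzero \<in> C" "bzero \<in> D"
    and "euclidean_LCD n C" "euclidean_LCD m D"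
  shows "euclidean_LCD (n + m) (dsum n C D)"
proof -
  have "edual n C \<subseteq> bvecs n"
    by (auto simp: edual_def)
  then show ?thesis
    using assms by (simp add: euclidean_LCD_def edual_dsum dsum_Int) (simp add: dsum_def)
qed

lemma euclidean_fsd_dsum:
  assumes "C \<subseteq> bvecs n" "D \<subseteq> bvecs m" "bzero \<in> C" "bzero \<in> D"
    and "euclidean_fsd n C" "euclidean_fsd m D"
  shows "euclidean_fsd (n + m) (dsum n C D)"
proof -
  have "edual n C \<subseteq> bvecs n" "edual m D \<subseteq> bvecs m"
    by (auto simp: edual_def)
  then show ?thesis
    using assms by (simp add: euclidean_fsd_def edual_dsum card_dsum_wt)
qed

lemma fsd_LCD_code_dsum:
  assumes "fsd_LCD_code n k d C" "fsd_LCD_code m l d D"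
  shows "fsd_LCD_code (n + m) (k + l) d (dsum n C D)"
proof -
  have lin: "binary_linear_code n C" "binary_linear_code m D"
    using assms by (simp_all add: fsd_LCD_code_def is_code_nkd_def)
  then have "C \<subseteq> bvecs n" "D \<subseteq> bvecs m" "bzero \<in> C" "bzero \<in> D"
    by (simp_all add: binary_linear_code_def)
  then show ?thesis
    using assms binary_linear_code_dsum[OF lin] min_dist_dsum[OF lin]
      euclidean_LCD_dsum euclidean_fsd_dsum
    by (simp add: fsd_LCD_code_def is_code_nkd_def card_dsum power_add)
qed

lemma fsd_LCD_code_exists_mult:
  assumes "fsd_LCD_code_exists n k d" "0 < s"
  shows "fsd_LCD_code_exists (s * n) (s * k) d"
  using assms(2)
proof (induction s rule: nat_induct_non_zero)
  case 1
  show ?case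
    using assms(1) by simp
next
  case (Suc s)
  then obtain C D where "fsd_LCD_code n k d C" "fsd_LCD_code (s * n) (s * k) d D"
    using assms(1) by (auto simp: fsd_LCD_code_exists_iff)
  then have "fsd_LCD_code (n + s * n) (k + s * k) d (dsum n C D)"
    by (rule fsd_LCD_code_dsum)
  then show ?case
    by (auto simp: fsd_LCD_code_exists_iff)
qed

lemma fsd_LCD_code_exists_scaled:
  assumes "fsd_LCD_code_exists (m + m) m d" "0 < s"
  shows "fsd_LCD_code_exists (4 * s * m) (2 * s * m) d"
proof -
  have "fsd_LCD_code_exists ((2 * s) * (m + m)) ((2 * s) * m) d"
    using assms by (intro fsd_LCD_code_exists_mult) simp_all
  moreover have "(2 * s) * (m + m) = 4 * s * m"
    by simp
  ultimately show ?thesis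
    by simp
qed

section \<open>Matrices over GF(2)\<close>

lemma card_less_eq_sum: "card {i::nat. i < m \<and> P i} = (\<Sum>i<m. of_bool (P i) :: nat)"
  by (induction m) (simp_all add: card_less_Suc_conv)

lemma odd_sum_iff_odd_card: "odd (\<Sum>i<m. f i :: nat) \<longleftrightarrow> odd (card {i::nat. i < m \<and> odd (f i)})"
  by (induction m) (auto simp: card_less_Suc_conv)

lemma odd_card_xor:
  "odd (card {i::nat. i < m \<and> (P i \<noteq> Q i)}) \<longleftrightarrow>
    odd (card {i. i < m \<and> P i}) \<noteq> odd (card {i. i < m \<and> Q i})"
  by (induction m) (auto simp: card_less_Suc_conv)

lemma odd_card_odd_card_swap:
  "odd (card {i::nat. i < m \<and> odd (card {j::nat. j < m \<and> R i j})}) \<longleftrightarrow>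
    odd (card {j. j < m \<and> odd (card {i. i < m \<and> R i j})})"
proof -
  have "odd (card {i::nat. i < m \<and> odd (card {j::nat. j < m \<and> R i j})}) \<longleftrightarrow>
      odd (\<Sum>i<m. \<Sum>j<m. of_bool (R i j) :: nat)"
    by (simp add: odd_sum_iff_odd_card card_less_eq_sum)
  also have "\<dots> \<longleftrightarrow> odd (\<Sum>j<m. \<Sum>i<m. of_bool (R i j) :: nat)"
    by (subst sum.swap) (rule refl)
  also have "\<dots> \<longleftrightarrow> odd (card {j. j < m \<and> odd (card {i. i < m \<and> R i j})})"
    by (simp add: odd_sum_iff_odd_card card_less_eq_sum)
  finally show ?thesis .
qed

definition vec_mat :: "nat \<Rightarrow> (nat \<Rightarrow> bool) \<Rightarrow> (nat \<Rightarrow> nat \<Rightarrow> bool) \<Rightarrow> nat \<Rightarrow> bool" where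
  "vec_mat m x A = (\<lambda>j. j < m \<and> odd (card {i. i < m \<and> x i \<and> A i j}))"

definition mat_mult :: "nat \<Rightarrow> (nat \<Rightarrow> nat \<Rightarrow> bool) \<Rightarrow> (nat \<Rightarrow> nat \<Rightarrow> bool) \<Rightarrow> nat \<Rightarrow> nat \<Rightarrow> bool" where
  "mat_mult m A B = (\<lambda>i k. odd (card {j. j < m \<and> A i j \<and> B j k}))"

lemma vec_mat_in_bvecs: "vec_mat m x A \<in> bvecs m"
  by (simp add: vec_mat_def bvecs_def)

lemma vec_mat_bzero [simp]: "vec_mat m bzero A = bzero"
  by (simp add: vec_mat_def bzero_def)

lemma vec_mat_badd: "vec_mat m (badd x y) A = badd (vec_mat m x A) (vec_mat m y A)"
proof
  fix j
  have eq: "{i. i < m \<and> badd x y i \<and> A i j} = {i. i < m \<and> ((x i \<and> A i j) \<noteq> (y i \<and> A i j))}"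
    by (auto simp: badd_def)
  have "vec_mat m (badd x y) A j \<longleftrightarrow>
      j < m \<and> (odd (card {i. i < m \<and> x i \<and> A i j}) \<noteq> odd (card {i. i < m \<and> y i \<and> A i j}))"
    unfolding vec_mat_def eq odd_card_xor by (rule refl)
  then show "vec_mat m (badd x y) A j = badd (vec_mat m x A) (vec_mat m y A) j"
    unfolding badd_def vec_mat_def by blast
qed

lemma vec_mat_mat_add:
  "vec_mat m x (\<lambda>i j. A i j \<noteq> B i j) = badd (vec_mat m x A) (vec_mat m x B)"
proof
  fix j
  have eq: "{i. i < m \<and> x i \<and> (A i j \<noteq> B i j)} = {i. i < m \<and> ((x i \<and> A i j) \<noteq> (x i \<and> B i j))}"
    by auto
  have "vec_mat m x (\<lambda>i j. A i j \<noteq> B i j) j \<longleftrightarrow>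
      j < m \<and> (odd (card {i. i < m \<and> x i \<and> A i j}) \<noteq> odd (card {i. i < m \<and> x i \<and> B i j}))"
    unfolding vec_mat_def eq odd_card_xor by (rule refl)
  then show "vec_mat m x (\<lambda>i j. A i j \<noteq> B i j) j = badd (vec_mat m x A) (vec_mat m x B) j"
    unfolding badd_def vec_mat_def by blast
qed

lemma vec_mat_mat_mult: "vec_mat m (vec_mat m x A) B = vec_mat m x (mat_mult m A B)"
proof
  fix k
  have "odd (card {i. i < m \<and> x i \<and> A i j}) \<and> B j k \<longleftrightarrow>
      odd (card {i. i < m \<and> (x i \<and> A i j \<and> B j k)})" for j
    by (cases "B j k") auto
  then have "{j. j < m \<and> vec_mat m x A j \<and> B j k} =
      {j. j < m \<and> odd (card {i. i < m \<and> (x i \<and> A i j \<and> B j k)})}"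
    by (auto simp: vec_mat_def)
  moreover have "x i \<and> odd (card {j. j < m \<and> A i j \<and> B j k}) \<longleftrightarrow>
      odd (card {j. j < m \<and> (x i \<and> A i j \<and> B j k)})" for i
    by (cases "x i") auto
  then have "{i. i < m \<and> x i \<and> mat_mult m A B i k} =
      {i. i < m \<and> odd (card {j. j < m \<and> (x i \<and> A i j \<and> B j k)})}"
    by (auto simp: mat_mult_def)
  ultimately show "vec_mat m (vec_mat m x A) B k = vec_mat m x (mat_mult m A B) k"
    unfolding vec_mat_def[of m _ B] vec_mat_def[of m _ "mat_mult m A B"]
    using odd_card_odd_card_swap[of m "\<lambda>i j. x i \<and> A i j \<and> B j k"] by simp
qed

lemma vec_mat_cong:
  assumes "\<And>i j. i < m \<Longrightarrow> j < m \<Longrightarrow> A i j = A' i j"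
  shows "vec_mat m x A = vec_mat m x A'"
proof
  fix j
  have "{i. i < m \<and> x i \<and> A i j} = {i. i < m \<and> x i \<and> A' i j}" if "j < m"
    using assms that by blast
  then show "vec_mat m x A j = vec_mat m x A' j"
    unfolding vec_mat_def by metis
qed

lemma vec_mat_id: "x \<in> bvecs m \<Longrightarrow> vec_mat m x (\<lambda>i j. i = j) = x"
proof
  fix j assume x: "x \<in> bvecs m"
  show "vec_mat m x (\<lambda>i j. i = j) j = x j"
  proof (cases "j < m")
    case True
    then have "{i. i < m \<and> x i \<and> i = j} = (if x j then {j} else {})"
      by auto
    then show ?thesis
      using True by (simp add: vec_mat_def)
  next
    case False
    then show ?thesis
      using x by (simp add: vec_mat_def bvecs_def)
  qed
qed

lemma vec_mat_inverse:
  assumes "\<And>i k. i < m \<Longrightarrow> k < m \<Longrightarrow> mat_mult m A B i k \<longleftrightarrow> i = k" "x \<in> bvecs m"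
  shows "vec_mat m (vec_mat m x A) B = x"
proof -
  have "vec_mat m (vec_mat m x A) B = vec_mat m x (mat_mult m A B)"
    by (rule vec_mat_mat_mult)
  also have "\<dots> = vec_mat m x (\<lambda>i j. i = j)"
    using assms(1) by (rule vec_mat_cong)
  also have "\<dots> = x"
    using assms(2) by (rule vec_mat_id)
  finally show ?thesis .
qed

lemma eorth_vec_mat_symmetric:
  assumes "\<And>i j. i < m \<Longrightarrow> j < m \<Longrightarrow> A i j = A j i"
  shows "eorth m x (vec_mat m y A) \<longleftrightarrow> eorth m (vec_mat m x A) y"
proof -
  have "x i \<and> odd (card {j. j < m \<and> y j \<and> A j i}) \<longleftrightarrow>
      odd (card {j. j < m \<and> (x i \<and> y j \<and> A i j)})" if "i < m" for i
  proof -
    have "{j. j < m \<and> y j \<and> A j i} = {j. j < m \<and> y j \<and> A i j}"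
      using assms that by blast
    then show ?thesis
      by (cases "x i") simp_all
  qed
  then have "{i. i < m \<and> x i \<and> vec_mat m y A i} =
      {i. i < m \<and> odd (card {j. j < m \<and> (x i \<and> y j \<and> A i j)})}"
    by (auto simp: vec_mat_def)
  moreover have "odd (card {i. i < m \<and> x i \<and> A i j}) \<and> y j \<longleftrightarrow>
      odd (card {i. i < m \<and> (x i \<and> y j \<and> A i j)})" for j
    by (cases "y j") auto
  then have "{j. j < m \<and> vec_mat m x A j \<and> y j} =
      {j. j < m \<and> odd (card {i. i < m \<and> (x i \<and> y j \<and> A i j)})}"
    by (auto simp: vec_mat_def)
  ultimately show ?thesis
    unfolding eorth_def using odd_card_odd_card_swap[of m "\<lambda>i j. x i \<and> y j \<and> A i j"] by simp
qed

lemma eorth_unit: "i < m \<Longrightarrow> eorth m (\<lambda>k. k = i) w \<longleftrightarrow> \<not> w i"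
proof -
  assume "i < m"
  then have "{k. k < m \<and> k = i \<and> w k} = (if w i then {i} else {})"
    by auto
  then show ?thesis
    by (simp add: eorth_def)
qed

lemma vec_mat_square_fixed_imp_bzero:
  assumes Q: "\<And>i j. i < m \<Longrightarrow> j < m \<Longrightarrow> Q i j \<longleftrightarrow> (i = j) \<noteq> mat_mult m A A i j"
    and QM: "\<And>i k. i < m \<Longrightarrow> k < m \<Longrightarrow> mat_mult m Q M i k \<longleftrightarrow> i = k"
    and x: "x \<in> bvecs m" "vec_mat m (vec_mat m x A) A = x"
  shows "x = bzero"
proof -
  have "vec_mat m x Q = vec_mat m x (\<lambda>i j. (i = j) \<noteq> mat_mult m A A i j)"
    using Q by (rule vec_mat_cong)
  also have "\<dots> = badd (vec_mat m x (\<lambda>i j. i = j)) (vec_mat m x (mat_mult m A A))"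
    by (rule vec_mat_mat_add)
  also have "\<dots> = badd x x"
    using x vec_mat_mat_mult[of m x A A] by (simp add: vec_mat_id)
  finally have "vec_mat m (vec_mat m x Q) M = bzero"
    by simp
  then show ?thesis
    using vec_mat_inverse[OF QM x(1)] by simp
qed

section \<open>Systematic codes with a symmetric redundancy part\<close>

definition systematic_code :: "nat \<Rightarrow> (nat \<Rightarrow> nat \<Rightarrow> bool) \<Rightarrow> (nat \<Rightarrow> bool) set" where
  "systematic_code m A = (\<lambda>x. cat m x (vec_mat m x A)) ` bvecs m"

lemma card_image_Collect: "inj_on f B \<Longrightarrow> card {z \<in> f ` B. P z} = card {x \<in> B. P (f x)}"
proof -
  assume inj: "inj_on f B"
  have "{z \<in> f ` B. P z} = f ` {x \<in> B. P (f x)}"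
    by auto
  then show ?thesis
    using inj by (simp add: card_image inj_on_subset)
qed

lemma inj_on_systematic_encoding: "inj_on (\<lambda>x. cat m x (vec_mat m x A)) (bvecs m)"
  by (rule inj_onI) (simp add: cat_eq_cat_iff)

lemma card_systematic_code: "card (systematic_code m A) = 2 ^ m"
  by (simp add: systematic_code_def card_image inj_on_systematic_encoding card_bvecs)

lemma binary_linear_code_systematic_code: "binary_linear_code (m + m) (systematic_code m A)"
proof -
  have "systematic_code m A \<subseteq> bvecs (m + m)"
    by (auto simp: systematic_code_def intro: cat_in_bvecs vec_mat_in_bvecs)
  moreover have "bzero \<in> systematic_code m A"
    using image_eqI[of bzero "\<lambda>x. cat m x (vec_mat m x A)" bzero "bvecs m"]
    by (simp add: systematic_code_def)
  moreover have "badd z z' \<in> systematic_code m A"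
    if z: "z \<in> systematic_code m A" "z' \<in> systematic_code m A" for z z'
  proof -
    obtain x x' where "x \<in> bvecs m" "x' \<in> bvecs m"
      and "z = cat m x (vec_mat m x A)" "z' = cat m x' (vec_mat m x' A)"
      using z by (auto simp: systematic_code_def)
    then have "badd z z' = cat m (badd x x') (vec_mat m (badd x x') A)"
      by (simp add: badd_cat vec_mat_badd)
    then show ?thesis
      using badd_in_bvecs[OF \<open>x \<in> bvecs m\<close> \<open>x' \<in> bvecs m\<close>]
      by (auto simp: systematic_code_def)
  qed
  ultimately show ?thesis
    by (simp add: binary_linear_code_def)
qed

lemma edual_systematic_code:
  assumes sym: "\<And>i j. i < m \<Longrightarrow> j < m \<Longrightarrow> A i j = A j i"
  shows "edual (m + m) (systematic_code m A) = (\<lambda>y. cat m (vec_mat m y A) y) ` bvecs m"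
proof (intro equalityI subsetI)
  fix z assume z: "z \<in> edual (m + m) (systematic_code m A)"
  then obtain u v where uv: "u \<in> bvecs m" "v \<in> bvecs m" "z = cat m u v"
    by (auto simp: edual_def elim: bvecs_add_cases)
  have "u i = vec_mat m v A i" for i
  proof (cases "i < m")
    case True
    let ?e = "\<lambda>k. k = i"
    have "?e \<in> bvecs m"
      using True by (simp add: bvecs_def)
    then have "eorth (m + m) (cat m ?e (vec_mat m ?e A)) z"
      using z by (auto simp: edual_def systematic_code_def)
    then have "eorth m ?e u \<longleftrightarrow> eorth m ?e (vec_mat m v A)"
      using eorth_vec_mat_symmetric[OF sym] by (simp add: uv(3) eorth_cat)
    then show ?thesis
      using True by (simp add: eorth_unit)
  next
    case False
    then show ?thesis
      using uv(1) by (simp add: bvecs_def vec_mat_def)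
  qed
  then have "u = vec_mat m v A"
    by (simp add: fun_eq_iff)
  then show "z \<in> (\<lambda>y. cat m (vec_mat m y A) y) ` bvecs m"
    using uv by blast
next
  fix z assume "z \<in> (\<lambda>y. cat m (vec_mat m y A) y) ` bvecs m"
  then show "z \<in> edual (m + m) (systematic_code m A)"
    using eorth_vec_mat_symmetric[OF sym]
    by (auto simp: edual_def systematic_code_def eorth_cat intro: cat_in_bvecs)
qed

lemma euclidean_fsd_systematic_code:
  assumes "\<And>i j. i < m \<Longrightarrow> j < m \<Longrightarrow> A i j = A j i"
  shows "euclidean_fsd (m + m) (systematic_code m A)"
proof -
  have dual: "edual (m + m) (systematic_code m A) = (\<lambda>y. cat m (vec_mat m y A) y) ` bvecs m"
    using assms by (rule edual_systematic_code)
  have "inj_on (\<lambda>y. cat m (vec_mat m y A) y) (bvecs m)"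
    by (rule inj_onI) (metis cat_eq_cat_iff vec_mat_in_bvecs)
  then show ?thesis
    unfolding euclidean_fsd_def dual unfolding systematic_code_def
    by (simp add: card_image_Collect inj_on_systematic_encoding wt_cat add.commute)
qed

lemma euclidean_LCD_systematic_code:
  assumes "\<And>i j. i < m \<Longrightarrow> j < m \<Longrightarrow> A i j = A j i"
    and "\<And>x. x \<in> bvecs m \<Longrightarrow> vec_mat m (vec_mat m x A) A = x \<Longrightarrow> x = bzero"
  shows "euclidean_LCD (m + m) (systematic_code m A)"
proof -
  have dual: "edual (m + m) (systematic_code m A) = (\<lambda>y. cat m (vec_mat m y A) y) ` bvecs m"
    using assms(1) by (rule edual_systematic_code)
  have "z = bzero"
    if z: "z \<in> systematic_code m A" "z \<in> (\<lambda>y. cat m (vec_mat m y A) y) ` bvecs m" for z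
  proof -
    obtain x y where xy: "x \<in> bvecs m" "y \<in> bvecs m"
      and zx: "z = cat m x (vec_mat m x A)" and zy: "z = cat m (vec_mat m y A) y"
      using z by (auto simp: systematic_code_def)
    from zx zy have "cat m x (vec_mat m x A) = cat m (vec_mat m y A) y"
      by simp
    then have "x = vec_mat m y A \<and> vec_mat m x A = y"
      using cat_eq_cat_iff xy(1) vec_mat_in_bvecs by blast
    then have "vec_mat m (vec_mat m x A) A = x"
      by metis
    then have "x = bzero"
      using xy(1) assms(2) by blast
    then show ?thesis
      using zx by simp
  qed
  moreover have "bzero \<in> systematic_code m A" "bzero \<in> (\<lambda>y. cat m (vec_mat m y A) y) ` bvecs m"
    using image_eqI[of bzero "\<lambda>x. cat m x (vec_mat m x A)" bzero "bvecs m"]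
      image_eqI[of bzero "\<lambda>y. cat m (vec_mat m y A) y" bzero "bvecs m"]
    by (simp_all add: systematic_code_def)
  ultimately show ?thesis
    unfolding euclidean_LCD_def dual by blast
qed

text \<open>A word of weight below \<open>d \<le> 2t + 2\<close> has a half of weight at most \<open>t\<close>.
  If it is the redundancy half \<open>y = xA\<close>, then \<open>x = yB\<close>, so it suffices to bound the
  weights of the words of \<open>[I | A]\<close> and \<open>[I | B]\<close> with information part of weight at most
  \<open>t\<close>.\<close>

lemma wt_systematic_lower_bound:
  assumes inverse: "\<And>x. x \<in> bvecs m \<Longrightarrow> vec_mat m (vec_mat m x A) B = x"
    and bound_A: "\<And>x. x \<in> bvecs m \<Longrightarrow> x \<noteq> bzero \<Longrightarrow> wt m x \<le> t \<Longrightarrow>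
      d \<le> wt m x + wt m (vec_mat m x A)"
    and bound_B: "\<And>y. y \<in> bvecs m \<Longrightarrow> y \<noteq> bzero \<Longrightarrow> wt m y \<le> t \<Longrightarrow>
      d \<le> wt m y + wt m (vec_mat m y B)"
    and "d \<le> 2 * t + 2" "x \<in> bvecs m" "x \<noteq> bzero"
  shows "d \<le> wt m x + wt m (vec_mat m x A)"
proof (rule ccontr)
  assume short: "\<not> d \<le> wt m x + wt m (vec_mat m x A)"
  then consider "wt m x \<le> t" | "wt m (vec_mat m x A) \<le> t"
    using assms(4) by linarith
  then show False
  proof cases
    case 1
    then show False
      using bound_A assms(5,6) short by blast
  next
    case 2
    have "vec_mat m x A \<noteq> bzero"
      using inverse[OF assms(5)] assms(6) by force
    then have "d \<le> wt m (vec_mat m x A) + wt m x"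
      using bound_B[OF vec_mat_in_bvecs _ 2] inverse[OF assms(5)] by simp
    then show False
      using short by linarith
  qed
qed

lemma fsd_LCD_code_systematic_code:
  assumes "\<And>i j. i < m \<Longrightarrow> j < m \<Longrightarrow> A i j = A j i"
    and "\<And>x. x \<in> bvecs m \<Longrightarrow> vec_mat m (vec_mat m x A) A = x \<Longrightarrow> x = bzero"
    and lower: "\<And>x. x \<in> bvecs m \<Longrightarrow> x \<noteq> bzero \<Longrightarrow> d \<le> wt m x + wt m (vec_mat m x A)"
    and witness: "x0 \<in> bvecs m" "x0 \<noteq> bzero" "wt m x0 + wt m (vec_mat m x0 A) = d"
  shows "fsd_LCD_code (m + m) m d (systematic_code m A)"
proof -
  have lin: "binary_linear_code (m + m) (systematic_code m A)"
    by (rule binary_linear_code_systematic_code)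
  have "d \<le> wt (m + m) z" if z: "z \<in> systematic_code m A - {bzero}" for z
  proof -
    obtain x where x: "x \<in> bvecs m" "z = cat m x (vec_mat m x A)"
      using z by (auto simp: systematic_code_def)
    moreover have "x \<noteq> bzero"
      using x z by auto
    ultimately show ?thesis
      using lower by (simp add: wt_cat)
  qed
  moreover have "cat m x0 (vec_mat m x0 A) \<in> systematic_code m A - {bzero}"
    using witness by (auto simp: systematic_code_def cat_eq_bzero_iff)
  moreover have "wt (m + m) (cat m x0 (vec_mat m x0 A)) = d"
    using witness by (simp add: wt_cat)
  ultimately have "systematic_code m A - {bzero} \<noteq> {} \<and> min_dist (m + m) (systematic_code m A) = d"
    using lin min_dist_eq_iff[of "systematic_code m A" "m + m" d]
    by (auto simp: binary_linear_code_def)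
  then show ?thesis
    using assms lin card_systematic_code euclidean_LCD_systematic_code euclidean_fsd_systematic_code
    by (simp add: fsd_LCD_code_def is_code_nkd_def)
qed

section \<open>Checking certificates on lists\<close>

fun xor_list :: "bool list \<Rightarrow> bool list \<Rightarrow> bool list" where
  "xor_list (True # as) (b # bs) = (\<not> b) # xor_list as bs"
| "xor_list (False # as) (b # bs) = b # xor_list as bs"
| "xor_list _ _ = []"

fun add_rows :: "bool list \<Rightarrow> bool list list \<Rightarrow> bool list \<Rightarrow> bool list" where
  "add_rows (True # v) (r # R) acc = add_rows v R (xor_list acc r)"
| "add_rows (False # v) (r # R) acc = add_rows v R acc"
| "add_rows _ _ acc = acc"

fun ones_at_least :: "bool list \<Rightarrow> nat \<Rightarrow> bool" where
  "ones_at_least _ 0 = True"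
| "ones_at_least [] (Suc n) = False"
| "ones_at_least (True # a) (Suc n) = ones_at_least a n"
| "ones_at_least (False # a) (Suc n) = ones_at_least a (Suc n)"

text \<open>\<open>low_wt_check e t acc R\<close> states that adding to \<open>acc\<close> any nonempty selection of at most
  \<open>t\<close> rows of \<open>R\<close> gives a vector whose weight plus the number of selected rows is at least
  \<open>e\<close>. The auxiliary \<open>low_wt_check_sum\<close> makes evaluation by the simplifier compute each sum
  only once.\<close>

fun low_wt_check :: "nat \<Rightarrow> nat \<Rightarrow> bool list \<Rightarrow> bool list list \<Rightarrow> bool"
  and low_wt_check_sum :: "nat \<Rightarrow> nat \<Rightarrow> bool list \<Rightarrow> bool list list \<Rightarrow> bool" where
  "low_wt_check e t acc [] = True"
| "low_wt_check e 0 acc (r # R) = True"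
| "low_wt_check 0 (Suc t) acc (r # R) = True"
| "low_wt_check (Suc e) (Suc t) acc (r # R) =
    (low_wt_check_sum e t (xor_list acc r) R \<and> low_wt_check (Suc e) (Suc t) acc R)"
| "low_wt_check_sum e t a R = (ones_at_least a e \<and> low_wt_check e t a R)"

definition square_list_mat :: "nat \<Rightarrow> bool list list \<Rightarrow> bool" where
  "square_list_mat m L \<longleftrightarrow> length L = m \<and> (\<forall>r\<in>set L. length r = m)"

definition list_mat :: "bool list list \<Rightarrow> nat \<Rightarrow> nat \<Rightarrow> bool" where
  "list_mat L i j = L ! i ! j"

definition list_of_vec :: "nat \<Rightarrow> (nat \<Rightarrow> bool) \<Rightarrow> bool list" where
  "list_of_vec m x = map x [0..<m]"

definition list_mat_mult :: "nat \<Rightarrow> bool list list \<Rightarrow> bool list list \<Rightarrow> bool list list" where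
  "list_mat_mult m X Y = map (\<lambda>r. add_rows r Y (replicate m False)) X"

definition list_mat_id :: "nat \<Rightarrow> bool list list" where
  "list_mat_id m = map (\<lambda>i. map (\<lambda>j. i = j) [0..<m]) [0..<m]"

definition list_mat_add :: "bool list list \<Rightarrow> bool list list \<Rightarrow> bool list list" where
  "list_mat_add X Y = map2 xor_list X Y"

lemma length_xor_list: "length (xor_list a b) = min (length a) (length b)"
  by (induction a b rule: xor_list.induct) auto

lemma nth_xor_list: "j < length a \<Longrightarrow> j < length b \<Longrightarrow> xor_list a b ! j = (a ! j \<noteq> b ! j)"
  by (induction a b arbitrary: j rule: xor_list.induct) (auto simp: nth_Cons split: nat.split)

lemma card_less_Suc_shift:
  "card {i::nat. i < Suc n \<and> P i} = of_bool (P 0) + card {i. i < n \<and> P (Suc i)}"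
proof -
  have "{i::nat. i < 1 \<and> P i} = (if P 0 then {0} else {})"
    by auto
  then show ?thesis
    using card_less_add[of 1 n P] by simp
qed

lemma add_rows_nth:
  assumes "length acc = m" "\<forall>r\<in>set R. length r = m" "length v = length R"
  shows "length (add_rows v R acc) = m \<and>
    (\<forall>j<m. add_rows v R acc ! j = (acc ! j \<noteq> odd (card {i. i < length R \<and> v ! i \<and> R ! i ! j})))"
  using assms
proof (induction R arbitrary: v acc)
  case Nil
  then show ?case
    by simp
next
  case (Cons r R)
  then obtain b v' where v: "v = b # v'" and lv: "length v' = length R"
    by (cases v) auto
  have lr: "length r = m" and lR: "\<forall>r\<in>set R. length r = m"
    using Cons.prems by auto
  show ?case
  proof (cases b)
    case True
    have "length (xor_list acc r) = m"
      using Cons.prems(1) lr by (simp add: length_xor_list)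
    note IH = Cons.IH[OF this lR lv]
    show ?thesis
      using IH v True Cons.prems(1) lr by (auto simp: card_less_Suc_shift nth_xor_list)
  next
    case False
    note IH = Cons.IH[OF Cons.prems(1) lR lv]
    show ?thesis
      using IH v False by (simp add: card_less_Suc_shift)
  qed
qed

lemma count_list_True_eq_card: "count_list l True = card {i. i < length l \<and> l ! i}"
proof (induction l)
  case (Cons a l)
  then show ?case
    by (cases a) (simp_all add: card_less_Suc_shift)
qed simp

lemma ones_at_least_iff: "ones_at_least a e \<longleftrightarrow> e \<le> count_list a True"
  by (induction a e rule: ones_at_least.induct) auto

lemma add_rows_no_selection: "count_list v True = 0 \<Longrightarrow> add_rows v R acc = acc"
  by (induction v R acc rule: add_rows.induct) auto

lemma low_wt_check_sound:
  "low_wt_check e t acc R \<Longrightarrow> length v = length R \<Longrightarrow> 0 < count_list v True \<Longrightarrow>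
    count_list v True \<le> t \<Longrightarrow> e \<le> count_list v True + count_list (add_rows v R acc) True"
proof (induction R arbitrary: e t acc v)
  case (Cons r R)
  then obtain b v' where v: "v = b # v'" and lv: "length v' = length R"
    by (cases v) auto
  show ?case
  proof (cases "e = 0 \<or> t = 0")
    case True
    then show ?thesis
      using Cons.prems by auto
  next
    case False
    then obtain e' t' where et: "e = Suc e'" "t = Suc t'"
      by (cases e; cases t) auto
    have check: "ones_at_least (xor_list acc r) e'" "low_wt_check e' t' (xor_list acc r) R"
      "low_wt_check (Suc e') (Suc t') acc R"
      using Cons.prems(1) et by simp_all
    show ?thesis
    proof (cases b)
      case True
      show ?thesis
      proof (cases "count_list v' True = 0")
        case True
        then show ?thesis
          using check(1) v \<open>b\<close> et by (simp add: add_rows_no_selection ones_at_least_iff)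
      next
        case False
        then have "e' \<le> count_list v' True + count_list (add_rows v' R (xor_list acc r)) True"
          using Cons.IH[OF check(2) lv] Cons.prems(4) v \<open>b\<close> et by simp
        then show ?thesis
          using v \<open>b\<close> et by simp
      qed
    next
      case False
      then show ?thesis
        using Cons.IH[OF check(3) lv] Cons.prems(3,4) v et by simp
    qed
  qed
qed simp

lemma length_list_of_vec [simp]: "length (list_of_vec m x) = m"
  by (simp add: list_of_vec_def)

lemma nth_list_of_vec [simp]: "i < m \<Longrightarrow> list_of_vec m x ! i = x i"
  by (simp add: list_of_vec_def)

lemma count_list_list_of_vec: "count_list (list_of_vec m x) True = wt m x"
proof -
  have "{i. i < m \<and> list_of_vec m x ! i} = {i. i < m \<and> x i}"
    by auto
  then show ?thesis
    by (simp add: count_list_True_eq_card wt_def)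
qed

lemma add_rows_list_of_vec:
  assumes "square_list_mat m L"
  shows "add_rows (list_of_vec m x) L (replicate m False) = list_of_vec m (vec_mat m x (list_mat L))"
proof -
  have L: "length L = m" "\<forall>r\<in>set L. length r = m"
    using assms by (auto simp: square_list_mat_def)
  note rows = add_rows_nth[of "replicate m False" m L "list_of_vec m x", OF _ L(2)]
  show ?thesis
  proof (rule nth_equalityI)
    show "length (add_rows (list_of_vec m x) L (replicate m False)) =
        length (list_of_vec m (vec_mat m x (list_mat L)))"
      using rows L by simp
    fix j assume "j < length (add_rows (list_of_vec m x) L (replicate m False))"
    then have j: "j < m"
      using rows L by simp
    have "{i. i < length L \<and> list_of_vec m x ! i \<and> L ! i ! j} = {i. i < m \<and> x i \<and> list_mat L i j}"
      using L by (auto simp: list_mat_def)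
    then show "add_rows (list_of_vec m x) L (replicate m False) ! j =
        list_of_vec m (vec_mat m x (list_mat L)) ! j"
      using rows L j by (simp add: vec_mat_def)
  qed
qed

lemma nth_list_mat_mult:
  assumes "square_list_mat m X" "square_list_mat m Y" "i < m" "k < m"
  shows "list_mat_mult m X Y ! i ! k = mat_mult m (list_mat X) (list_mat Y) i k"
proof -
  have X: "length X = m" "length (X ! i) = m" and Y: "length Y = m" "\<forall>r\<in>set Y. length r = m"
    using assms by (auto simp: square_list_mat_def)
  note row = add_rows_nth[of "replicate m False" m Y "X ! i", OF _ Y(2)]
  have "list_mat_mult m X Y ! i = add_rows (X ! i) Y (replicate m False)"
    using X assms(3) by (simp add: list_mat_mult_def)
  moreover have "{j. j < length Y \<and> X ! i ! j \<and> Y ! j ! k} =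
      {j. j < m \<and> list_mat X i j \<and> list_mat Y j k}"
    using Y by (auto simp: list_mat_def)
  ultimately show ?thesis
    using row X Y assms(4) by (simp add: mat_mult_def)
qed

lemma square_list_mat_mult:
  assumes "square_list_mat m X" "square_list_mat m Y"
  shows "square_list_mat m (list_mat_mult m X Y)"
proof -
  have "length (add_rows r Y (replicate m False)) = m" if "r \<in> set X" for r
    using add_rows_nth[of "replicate m False" m Y r] that assms by (auto simp: square_list_mat_def)
  then show ?thesis
    using assms by (auto simp: square_list_mat_def list_mat_mult_def)
qed

lemma nth_list_mat_id: "i < m \<Longrightarrow> k < m \<Longrightarrow> list_mat_id m ! i ! k = (i = k)"
  by (simp add: list_mat_id_def)

lemma square_list_mat_id: "square_list_mat m (list_mat_id m)"
  by (auto simp: square_list_mat_def list_mat_id_def)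

lemma nth_list_mat_add:
  assumes "square_list_mat m X" "square_list_mat m Y" "i < m" "j < m"
  shows "list_mat_add X Y ! i ! j = (X ! i ! j \<noteq> Y ! i ! j)"
  using assms by (auto simp: square_list_mat_def list_mat_add_def nth_xor_list)

lemma square_list_mat_add:
  "square_list_mat m X \<Longrightarrow> square_list_mat m Y \<Longrightarrow> square_list_mat m (list_mat_add X Y)"
  by (auto simp: square_list_mat_def list_mat_add_def length_xor_list set_zip)

lemma list_mat_symmetric:
  assumes "square_list_mat m A" "transpose A = A" "i < m" "j < m"
  shows "list_mat A i j = list_mat A j i"
proof -
  have lA: "length A = m" "\<forall>r\<in>set A. length r = m"
    using assms(1) by (auto simp: square_list_mat_def)
  have "i < length (transpose A)"
    using assms(2,3) lA by simp
  then have "transpose A ! i = map (\<lambda>xs. xs ! i) (filter (\<lambda>ys. i < length ys) A)"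
    by (rule nth_transpose)
  moreover have "filter (\<lambda>ys. i < length ys) A = A"
    using lA assms(3) by (auto simp: filter_id_conv)
  ultimately have "A ! i = map (\<lambda>xs. xs ! i) A"
    using assms(2) by simp
  then show ?thesis
    using lA assms(4) by (simp add: list_mat_def)
qed

lemma wt_bound_of_low_wt_check:
  assumes "square_list_mat m L" "low_wt_check d t (replicate m False) L"
    and "x \<in> bvecs m" "x \<noteq> bzero" "wt m x \<le> t"
  shows "d \<le> wt m x + wt m (vec_mat m x (list_mat L))"
proof -
  have "length (list_of_vec m x) = length L"
    using assms(1) by (simp add: square_list_mat_def)
  moreover have "0 < count_list (list_of_vec m x) True" "count_list (list_of_vec m x) True \<le> t"
    using wt_pos[OF assms(3,4)] assms(5) by (simp_all add: count_list_list_of_vec)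
  ultimately have "d \<le> count_list (list_of_vec m x) True +
      count_list (add_rows (list_of_vec m x) L (replicate m False)) True"
    by (rule low_wt_check_sound[OF assms(2)])
  then show ?thesis
    by (simp add: add_rows_list_of_vec[OF assms(1)] count_list_list_of_vec)
qed

lemma mat_mult_list_mat_iff:
  assumes "square_list_mat m X" "square_list_mat m Y" "list_mat_mult m X Y = list_mat_id m"
    and "i < m" "k < m"
  shows "mat_mult m (list_mat X) (list_mat Y) i k \<longleftrightarrow> i = k"
  using nth_list_mat_mult[OF assms(1,2,4,5)] assms(3) nth_list_mat_id[OF assms(4,5)] by simp

lemma list_mat_id_add_square:
  assumes "square_list_mat m A" "i < m" "j < m"
  shows "list_mat (list_mat_add (list_mat_id m) (list_mat_mult m A A)) i j \<longleftrightarrow>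
    (i = j) \<noteq> mat_mult m (list_mat A) (list_mat A) i j"
  using nth_list_mat_add[OF square_list_mat_id square_list_mat_mult[OF assms(1,1)] assms(2,3)]
    nth_list_mat_mult[OF assms(1,1,2,3)] nth_list_mat_id[OF assms(2,3)]
  by (simp add: list_mat_def)

lemma fsd_LCD_code_exists_certified:
  assumes sq: "square_list_mat m A" "square_list_mat m B" "square_list_mat m M"
    and sym: "transpose A = A"
    and inverse: "list_mat_mult m A B = list_mat_id m"
    and LCD: "list_mat_mult m (list_mat_add (list_mat_id m) (list_mat_mult m A A)) M = list_mat_id m"
    and check: "low_wt_check d t (replicate m False) A" "low_wt_check d t (replicate m False) B"
    and dt: "d \<le> 2 * t + 2"
    and witness: "length w = m" "0 < count_list w True"
      "count_list w True + count_list (add_rows w A (replicate m False)) True = d"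
  shows "fsd_LCD_code_exists (m + m) m d"
proof -
  have sqQ: "square_list_mat m (list_mat_add (list_mat_id m) (list_mat_mult m A A))"
    by (intro square_list_mat_add square_list_mat_mult sq(1) square_list_mat_id)
  define x0 where "x0 = (\<lambda>i. i < m \<and> w ! i)"
  have w: "list_of_vec m x0 = w"
    using witness(1) by (intro nth_equalityI) (auto simp: x0_def)
  have x0: "x0 \<in> bvecs m" "x0 \<noteq> bzero" "wt m x0 + wt m (vec_mat m x0 (list_mat A)) = d"
    using witness(2,3) unfolding w[symmetric] add_rows_list_of_vec[OF sq(1)] count_list_list_of_vec
    by (auto simp: x0_def bvecs_def)
  have "fsd_LCD_code (m + m) m d (systematic_code m (list_mat A))"
  proof (rule fsd_LCD_code_systematic_code[OF _ _ _ x0])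
    show "list_mat A i j = list_mat A j i" if "i < m" "j < m" for i j
      using list_mat_symmetric[OF sq(1) sym that] .
    show "x = bzero" if "x \<in> bvecs m" "vec_mat m (vec_mat m x (list_mat A)) (list_mat A) = x" for x
      using vec_mat_square_fixed_imp_bzero[OF list_mat_id_add_square[OF sq(1)]
          mat_mult_list_mat_iff[OF sqQ sq(3) LCD] that] .
    show "d \<le> wt m x + wt m (vec_mat m x (list_mat A))" if "x \<in> bvecs m" "x \<noteq> bzero" for x
      using wt_systematic_lower_bound[OF vec_mat_inverse[OF mat_mult_list_mat_iff[OF sq(1,2) inverse]]
          wt_bound_of_low_wt_check[OF sq(1) check(1)] wt_bound_of_low_wt_check[OF sq(2) check(2)]
          dt that] .
  qed
  then show ?thesis
    by (auto simp: fsd_LCD_code_exists_iff)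
qed

section \<open>The codes\<close>

definition A22 :: "bool list list" where
  "A22 = [[False,False,True,True,False,False,False,False,True,False,True],
  [False,True,False,True,True,True,True,True,False,True,False],
  [True,False,False,True,True,False,False,False,False,False,True],
  [True,True,True,True,True,True,False,False,False,False,False],
  [False,True,True,True,False,False,False,False,False,True,False],
  [False,True,False,True,False,True,True,True,False,False,True],
  [False,True,False,False,False,True,False,True,True,True,True],
  [False,True,False,False,False,True,True,False,True,False,False],
  [True,False,False,False,False,False,True,True,True,True,False],
  [False,True,False,False,True,False,True,False,True,True,True],
  [True,False,True,False,False,True,True,False,False,True,True]]"

definition B22 :: "bool list list" where
  "B22 = [[True,True,False,False,False,False,True,True,False,True,True],
  [True,True,True,False,False,True,False,True,False,False,True],
  [False,True,False,False,True,False,True,False,False,True,False],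
  [False,False,False,False,True,False,True,False,True,False,True],
  [False,False,True,True,False,False,True,True,True,True,True],
  [False,True,False,False,False,True,False,True,False,True,False],
  [True,False,True,True,True,False,True,True,True,False,True],
  [True,True,False,False,True,True,True,True,False,True,False],
  [False,False,False,True,True,False,True,False,True,True,False],
  [True,False,True,False,True,True,False,True,True,True,False],
  [True,True,False,True,True,False,True,False,False,False,True]]"

definition M22 :: "bool list list" where
  "M22 = [[True,True,True,False,True,False,True,False,True,False,True],
  [True,True,True,False,False,True,False,True,True,False,True],
  [True,True,False,True,False,True,False,False,False,True,False],
  [False,False,True,False,True,False,False,False,False,True,True],
  [True,False,False,True,True,True,True,False,True,False,False],
  [False,True,True,False,True,False,False,True,False,True,False],
  [True,False,False,False,True,False,True,True,False,False,True],
  [False,True,False,False,False,True,True,False,True,False,False],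
  [True,True,False,False,True,False,False,True,True,False,False],
  [False,False,True,True,False,True,False,False,False,True,True],
  [True,True,False,True,False,False,True,False,False,True,True]]"

definition w22 :: "bool list" where
  "w22 = [True,False,False,False,False,False,False,False,False,False,False]"

lemma fsd_LCD_code_exists_22_11_5: "fsd_LCD_code_exists (11 + 11) 11 5"
  by (rule fsd_LCD_code_exists_certified[where A = A22 and B = B22 and M = M22 and t = 2 and w = w22])
    (simp_all add: A22_def B22_def M22_def w22_def square_list_mat_def list_mat_mult_def
      list_mat_id_def list_mat_add_def upt_rec numeral_eq_Suc)

definition A24 :: "bool list list" where
  "A24 = [[True,False,True,False,False,False,True,False,True,False,False,True],
  [False,True,False,False,True,True,False,True,False,True,False,True],
  [True,False,False,True,False,True,True,True,False,False,True,False],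
  [False,False,True,False,True,False,True,True,True,True,True,False],
  [False,True,False,True,False,True,False,False,True,True,False,True],
  [False,True,True,False,True,False,False,False,True,True,False,False],
  [True,False,True,True,False,False,False,True,False,True,True,True],
  [False,True,True,True,False,False,True,False,False,True,True,True],
  [True,False,False,True,True,True,False,False,True,False,True,False],
  [False,True,False,True,True,True,True,True,False,True,True,False],
  [False,False,True,True,False,False,True,True,True,True,False,True],
  [True,True,False,False,True,False,True,True,False,False,True,True]]"

definition B24 :: "bool list list" where
  "B24 = [[True,True,True,False,False,False,False,False,False,False,True,True],
  [True,False,False,False,False,True,True,False,True,True,True,True],
  [True,False,True,False,True,False,True,False,True,True,True,False],
  [False,False,False,True,False,False,True,True,False,False,True,True],
  [False,False,True,False,True,False,True,True,True,True,False,True],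
  [False,True,False,False,False,False,False,True,True,True,True,True],
  [False,True,True,True,True,False,True,True,True,False,True,True],
  [False,False,False,True,True,True,True,False,False,True,True,True],
  [False,True,True,False,True,True,True,False,True,False,False,True],
  [False,True,True,False,True,True,False,True,False,True,False,True],
  [True,True,True,True,False,True,True,True,False,False,True,True],
  [True,True,False,True,True,True,True,True,True,True,True,True]]"

definition M24 :: "bool list list" where
  "M24 = [[True,True,True,False,False,False,True,True,True,False,False,False],
  [True,True,True,False,False,False,False,False,False,True,False,False],
  [True,True,True,True,False,False,False,False,False,True,False,True],
  [False,False,True,False,True,True,False,True,False,False,False,True],
  [False,False,False,True,True,False,False,True,False,False,False,False],
  [False,False,False,True,False,True,True,True,False,True,True,False],
  [True,False,False,False,False,True,False,False,True,True,True,True],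
  [True,False,False,True,True,True,False,False,False,True,False,False],
  [True,False,False,False,False,False,True,False,True,False,False,True],
  [False,True,True,False,False,True,True,True,False,False,False,True],
  [False,False,False,False,False,True,True,False,False,False,False,True],
  [False,False,True,True,False,False,True,False,True,True,True,True]]"

definition w24 :: "bool list" where
  "w24 = [True,False,False,False,False,False,False,False,False,False,False,False]"

lemma fsd_LCD_code_exists_24_12_6: "fsd_LCD_code_exists (12 + 12) 12 6"
  by (rule fsd_LCD_code_exists_certified[where A = A24 and B = B24 and M = M24 and t = 2 and w = w24])
    (simp_all add: A24_def B24_def M24_def w24_def square_list_mat_def list_mat_mult_def
      list_mat_id_def list_mat_add_def upt_rec numeral_eq_Suc)

definition A26 :: "bool list list" where
  "A26 = [[False,False,True,False,True,True,True,True,True,True,False,True,False],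
  [False,True,True,True,True,True,True,False,False,True,False,False,False],
  [True,True,False,True,True,True,False,False,True,True,False,True,True],
  [False,True,True,True,False,False,True,False,True,False,True,True,False],
  [True,True,True,False,False,False,True,True,True,True,False,False,True],
  [True,True,True,False,False,False,True,True,False,False,True,True,False],
  [True,True,False,True,True,True,False,True,True,False,True,True,False],
  [True,False,False,False,True,True,True,False,True,True,False,False,False],
  [True,False,True,True,True,False,True,True,False,True,True,False,False],
  [True,True,True,False,True,False,False,True,True,False,True,False,False],
  [False,False,False,True,False,True,True,False,True,True,False,True,True],
  [True,False,True,True,False,True,True,False,False,False,True,False,True],
  [False,False,True,False,True,False,False,False,False,False,True,True,True]]"

definition B26 :: "bool list list" where
  "B26 = [[True,True,True,False,False,False,False,False,True,False,False,True,False],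
  [True,False,False,True,True,True,False,True,True,False,False,False,True],
  [True,False,True,True,True,True,True,True,True,True,True,True,False],
  [False,True,True,True,False,False,True,True,True,False,False,False,True],
  [False,True,True,False,True,False,False,False,False,True,True,True,False],
  [False,True,True,False,False,True,True,True,False,False,True,False,False],
  [False,False,True,True,False,True,False,True,False,True,False,False,True],
  [False,True,True,True,False,True,True,True,False,True,True,True,True],
  [True,True,True,True,False,False,False,False,False,True,True,False,False],
  [False,False,True,False,True,False,True,True,True,True,True,False,True],
  [False,False,True,False,True,True,False,True,True,True,False,False,False],
  [True,False,True,False,True,False,False,True,False,False,False,True,True],
  [False,True,False,True,False,False,True,True,False,True,False,True,False]]"

definition M26 :: "bool list list" where
  "M26 = [[True,False,True,True,False,True,False,True,True,False,False,False,True],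
  [False,False,True,False,True,False,True,True,False,False,False,True,True],
  [True,True,False,False,False,False,True,True,False,True,True,False,True],
  [True,False,False,False,False,False,True,False,True,False,False,True,False],
  [False,True,False,False,True,False,False,False,False,False,False,False,False],
  [True,False,False,False,False,False,True,True,False,True,False,False,True],
  [False,True,True,True,False,True,False,True,True,True,True,False,True],
  [True,True,True,False,False,True,True,False,True,False,False,True,False],
  [True,False,False,True,False,False,True,True,True,False,False,True,True],
  [False,False,True,False,False,True,True,False,False,False,True,True,False],
  [False,False,True,False,False,False,True,False,False,True,False,True,True],
  [False,True,False,True,False,False,False,True,True,True,True,False,False],
  [True,True,True,False,False,True,True,False,True,False,True,False,False]]"

definition w26 :: "bool list" where
  "w26 = [False,False,False,False,False,False,False,False,False,False,False,False,True]"

lemma fsd_LCD_code_exists_26_13_6: "fsd_LCD_code_exists (13 + 13) 13 6"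
  by (rule fsd_LCD_code_exists_certified[where A = A26 and B = B26 and M = M26 and t = 2 and w = w26])
    (simp_all add: A26_def B26_def M26_def w26_def square_list_mat_def list_mat_mult_def
      list_mat_id_def list_mat_add_def upt_rec numeral_eq_Suc)

definition A28 :: "bool list list" where
  "A28 = [[True,True,True,True,True,True,True,True,False,False,False,True,False,False],
  [True,False,True,True,True,False,False,False,True,True,False,True,False,True],
  [True,True,False,False,True,False,False,False,False,True,False,True,True,False],
  [True,True,False,True,False,False,False,True,True,True,True,True,True,True],
  [True,True,True,False,False,True,True,True,True,False,False,False,False,True],
  [True,False,False,False,True,True,False,False,True,False,True,True,False,False],
  [True,False,False,False,True,False,False,True,True,False,False,True,False,True],
  [True,False,False,True,True,False,True,True,False,False,True,False,True,False],
  [False,True,False,True,True,True,True,False,False,False,True,True,False,True],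
  [False,True,True,True,False,False,False,False,False,False,True,True,False,False],
  [False,False,False,True,False,True,False,True,True,True,False,True,False,True],
  [True,True,True,True,False,True,True,False,True,True,True,False,True,True],
  [False,False,True,True,False,False,False,True,False,False,False,True,True,True],
  [False,True,False,True,True,False,True,False,True,False,True,True,True,False]]"

definition B28 :: "bool list list" where
  "B28 = [[False,True,True,False,False,False,False,True,False,False,False,False,True,True],
  [True,True,False,True,True,True,False,False,True,False,True,True,False,False],
  [True,False,False,False,True,True,True,True,True,True,True,True,True,True],
  [False,True,False,True,True,False,True,True,True,False,True,True,True,False],
  [False,True,True,True,False,True,True,False,False,False,False,True,False,True],
  [False,True,True,False,True,False,False,False,False,True,True,True,False,False],
  [False,False,True,True,True,False,False,False,True,True,True,True,True,False],
  [True,False,True,True,False,False,False,False,True,False,True,True,False,True],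
  [False,True,True,True,False,False,True,True,True,True,False,True,True,True],
  [False,False,True,False,False,True,True,False,True,True,True,True,False,False],
  [False,True,True,True,False,True,True,True,False,True,True,False,False,True],
  [False,True,True,True,True,True,True,True,True,True,False,True,False,False],
  [True,False,True,True,False,False,True,False,True,False,False,False,True,False],
  [True,False,True,False,True,False,False,True,True,False,True,False,False,False]]"

definition M28 :: "bool list list" where
  "M28 = [[False,False,False,True,True,False,True,True,True,True,True,True,True,True],
  [False,False,True,True,False,True,True,False,False,True,True,False,True,True],
  [False,True,False,True,False,True,True,False,False,True,True,False,False,False],
  [True,True,True,False,True,False,False,True,False,True,False,True,True,False],
  [True,False,False,True,False,False,True,True,True,True,False,False,True,False],
  [False,True,True,False,False,True,False,False,False,True,False,True,True,True],
  [True,True,True,False,True,False,True,False,False,True,False,False,False,True],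
  [True,False,False,True,True,False,False,False,True,False,True,True,False,True],
  [True,False,False,False,True,False,False,True,True,False,False,True,False,True],
  [True,True,True,True,True,True,True,False,False,True,False,False,True,False],
  [True,True,True,False,False,False,False,True,False,False,True,False,True,False],
  [True,False,False,True,False,True,False,True,True,False,False,True,False,False],
  [True,True,False,True,True,True,False,False,False,True,True,False,True,False],
  [True,True,False,False,False,True,True,True,True,False,False,False,False,False]]"

definition w28 :: "bool list" where
  "w28 = [False,False,False,False,False,False,False,False,False,True,False,False,False,False]"

lemma fsd_LCD_code_exists_28_14_6: "fsd_LCD_code_exists (14 + 14) 14 6"
  by (rule fsd_LCD_code_exists_certified[where A = A28 and B = B28 and M = M28 and t = 2 and w = w28])
    (simp_all add: A28_def B28_def M28_def w28_def square_list_mat_def list_mat_mult_def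
      list_mat_id_def list_mat_add_def upt_rec numeral_eq_Suc)

definition A30 :: "bool list list" where
  "A30 = [[False,False,False,True,False,True,True,False,True,True,True,True,True,False,False],
  [False,True,False,True,True,True,True,True,False,True,True,True,False,True,False],
  [False,False,False,True,False,True,True,False,True,True,False,True,False,True,True],
  [True,True,True,False,True,True,False,False,True,True,True,False,True,False,True],
  [False,True,False,True,True,False,True,False,True,True,True,True,False,False,False],
  [True,True,True,True,False,False,True,False,True,True,True,False,True,True,False],
  [True,True,True,False,True,True,False,True,True,True,False,True,False,True,False],
  [False,True,False,False,False,False,True,True,False,True,False,True,False,True,False],
  [True,False,True,True,True,True,True,False,False,True,False,False,False,True,False],
  [True,True,True,True,True,True,True,True,True,True,True,True,True,True,False],
  [True,True,False,True,True,True,False,False,False,True,True,False,False,False,True],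
  [True,True,True,False,True,False,True,True,False,True,False,True,True,False,True],
  [True,False,False,True,False,True,False,False,False,True,False,True,False,False,True],
  [False,True,True,False,False,True,True,True,True,True,False,False,False,True,True],
  [False,False,True,True,False,False,False,False,False,False,True,True,True,True,False]]"

definition B30 :: "bool list list" where
  "B30 = [[True,False,False,True,False,True,True,True,True,True,False,False,False,True,False],
  [False,False,True,True,True,True,True,True,False,False,False,True,False,True,True],
  [False,True,True,False,True,False,True,False,True,False,True,True,False,True,True],
  [True,True,False,False,False,True,True,True,True,False,True,False,False,True,False],
  [False,True,True,False,True,True,False,False,True,False,False,False,False,True,True],
  [True,True,False,True,True,False,True,False,True,True,False,False,False,True,True],
  [True,True,True,True,False,True,False,False,False,True,False,True,False,True,True],
  [True,True,False,True,False,False,False,True,False,True,False,True,True,True,False],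
  [True,False,True,True,True,True,False,False,False,True,True,False,False,True,False],
  [True,False,False,False,False,True,True,True,True,False,True,True,True,True,True],
  [False,False,True,True,False,False,False,False,True,True,True,False,False,True,False],
  [False,True,True,False,False,False,True,True,False,True,False,True,True,True,False],
  [False,False,False,False,False,False,False,True,False,True,False,True,False,True,True],
  [True,True,True,True,True,True,True,True,True,True,True,True,True,True,True],
  [False,True,True,False,True,True,True,False,False,True,False,False,True,True,False]]"

definition M30 :: "bool list list" where
  "M30 = [[True,False,True,False,False,True,False,False,False,True,True,True,False,False,True],
  [False,True,False,False,False,True,False,False,True,True,False,False,True,True,False],
  [True,False,False,False,False,False,False,True,False,False,True,False,True,False,False],
  [False,False,False,True,False,False,True,True,True,True,False,True,True,False,False],
  [False,False,False,False,True,False,True,False,False,False,False,True,True,False,True],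
  [True,True,False,False,False,True,True,True,False,False,False,False,False,True,False],
  [False,False,False,True,True,True,False,True,False,False,False,False,True,True,True],
  [False,False,True,True,False,True,True,True,True,False,True,False,True,False,True],
  [False,True,False,True,False,False,False,True,False,True,False,True,True,False,False],
  [True,True,False,True,False,False,False,False,True,True,True,True,True,True,True],
  [True,False,True,False,False,False,False,True,False,True,True,False,True,False,True],
  [True,False,False,True,True,False,False,False,True,True,False,True,True,True,False],
  [False,True,True,True,True,False,True,True,True,True,True,True,True,False,False],
  [False,True,False,False,False,True,True,False,False,True,False,True,False,False,True],
  [True,False,False,False,True,False,True,True,False,True,True,False,False,True,True]]"

definition w30 :: "bool list" where
  "w30 = [True,False,True,False,False,False,False,False,False,False,False,False,False,False,False]"

lemma fsd_LCD_code_exists_30_15_6: "fsd_LCD_code_exists (15 + 15) 15 6"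
  by (rule fsd_LCD_code_exists_certified[where A = A30 and B = B30 and M = M30 and t = 2 and w = w30])
    (simp_all add: A30_def B30_def M30_def w30_def square_list_mat_def list_mat_mult_def
      list_mat_id_def list_mat_add_def upt_rec numeral_eq_Suc)

definition A32 :: "bool list list" where
  "A32 = [[False,True,True,False,True,True,True,False,True,True,True,True,False,True,True,True],
  [True,True,False,False,False,True,True,False,True,False,False,True,False,True,False,True],
  [True,False,False,False,True,False,True,True,True,False,False,True,True,False,True,True],
  [False,False,False,False,False,False,False,True,True,False,True,True,True,True,False,True],
  [True,False,True,False,False,False,True,True,True,False,True,True,True,False,True,False],
  [True,True,False,False,False,True,False,True,False,True,True,True,True,False,False,True],
  [True,True,True,False,True,False,False,True,True,True,True,True,True,True,True,False],
  [False,False,True,True,True,True,True,False,False,True,False,False,False,True,False,True],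
  [True,True,True,True,True,False,True,False,True,False,True,False,True,True,False,False],
  [True,False,False,False,False,True,True,True,False,False,False,True,False,False,True,False],
  [True,False,False,True,True,True,True,False,True,False,True,False,True,True,True,False],
  [True,True,True,True,True,True,True,False,False,True,False,True,True,True,False,True],
  [False,False,True,True,True,True,True,False,True,False,True,True,False,False,True,False],
  [True,True,False,True,False,False,True,True,True,False,True,True,False,True,True,True],
  [True,False,True,False,True,False,True,False,False,True,True,False,True,True,True,True],
  [True,True,True,True,False,True,False,True,False,False,False,True,False,True,True,False]]"

definition B32 :: "bool list list" where
  "B32 = [[False,False,True,True,False,True,True,False,False,False,False,False,False,True,False,True],
  [False,False,True,False,False,True,False,True,True,True,True,False,False,True,False,False],
  [True,True,True,False,True,True,False,False,True,False,False,True,True,False,True,True],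
  [True,False,False,True,True,False,True,True,False,False,False,True,False,False,False,True],
  [False,False,True,True,False,False,True,True,False,True,True,True,True,True,True,True],
  [True,True,True,False,False,False,False,True,False,True,True,False,False,False,False,False],
  [True,False,False,True,True,False,True,False,False,True,True,False,True,False,False,False],
  [False,True,False,True,True,True,False,True,False,False,True,False,False,False,False,False],
  [False,True,True,False,False,False,False,False,False,True,True,True,False,False,True,False],
  [False,True,False,False,True,True,True,False,True,False,True,True,False,True,False,False],
  [False,True,False,False,True,True,True,True,True,True,True,False,True,False,True,False],
  [False,False,True,True,True,False,False,False,True,True,False,True,False,False,True,False],
  [False,False,True,False,True,False,True,False,False,False,True,False,False,False,True,True],
  [True,True,False,False,True,False,False,False,False,True,False,False,False,True,True,True],
  [False,False,True,False,True,False,False,False,True,False,True,True,True,True,True,True],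
  [True,False,True,True,True,False,False,False,False,False,False,False,True,True,True,False]]"

definition M32 :: "bool list list" where
  "M32 = [[True,True,False,False,True,True,False,True,True,True,False,True,False,False,True,True],
  [True,True,False,False,True,True,True,False,True,False,True,True,False,True,True,True],
  [False,False,False,True,False,True,True,True,True,False,True,True,False,False,True,True],
  [False,False,True,True,False,False,False,True,True,False,False,True,True,False,False,True],
  [True,True,False,False,False,True,False,True,False,True,False,True,True,True,True,True],
  [True,True,True,False,True,True,True,True,True,True,True,False,False,True,False,False],
  [False,True,True,False,False,True,False,True,True,True,True,False,True,False,True,True],
  [True,False,True,True,True,True,True,True,True,False,False,True,False,False,False,False],
  [True,True,True,True,False,True,True,True,False,False,False,True,False,True,True,True],
  [True,False,False,False,True,True,True,False,False,True,True,True,True,True,False,False],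
  [False,True,True,False,False,True,True,False,False,True,True,True,True,True,False,True],
  [True,True,True,True,True,False,False,True,True,True,True,False,True,True,False,False],
  [False,False,False,True,True,False,True,False,False,True,True,True,True,True,True,False],
  [False,True,False,False,True,True,False,False,True,True,True,True,True,False,True,True],
  [True,True,True,False,True,False,True,False,True,False,False,False,True,True,True,False],
  [True,True,True,True,True,False,True,False,True,False,True,False,False,True,False,True]]"

definition w32 :: "bool list" where
  "w32 = [False,False,True,False,True,False,False,False,False,False,False,False,False,False,False,False]"

lemma fsd_LCD_code_exists_32_16_6: "fsd_LCD_code_exists (16 + 16) 16 6"
  by (rule fsd_LCD_code_exists_certified[where A = A32 and B = B32 and M = M32 and t = 2 and w = w32])
    (simp_all add: A32_def B32_def M32_def w32_def square_list_mat_def list_mat_mult_def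
      list_mat_id_def list_mat_add_def upt_rec numeral_eq_Suc)

definition A34 :: "bool list list" where
  "A34 = [[False,False,False,False,False,False,True,False,False,True,False,True,True,True,True,False,True],
  [False,True,True,True,True,False,True,True,False,True,True,False,False,False,False,False,True],
  [False,True,False,True,True,True,False,False,True,True,False,True,False,False,False,True,True],
  [False,True,True,False,False,True,False,True,True,False,False,True,True,True,False,False,True],
  [False,True,True,False,True,False,False,True,True,True,True,False,True,True,True,True,True],
  [False,False,True,True,False,True,True,False,True,True,False,False,False,False,True,True,True],
  [True,True,False,False,False,True,True,True,True,True,True,True,True,True,False,False,True],
  [False,True,False,True,True,False,True,False,True,True,True,True,True,True,True,True,False],
  [False,False,True,True,True,True,True,True,True,False,True,False,True,False,False,True,False],
  [True,True,True,False,True,True,True,True,False,True,False,False,False,False,True,False,True],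
  [False,True,False,False,True,False,True,True,True,False,False,False,False,True,True,False,False],
  [True,False,True,True,False,False,True,True,False,False,False,False,True,True,True,True,True],
  [True,False,False,True,True,False,True,True,True,False,False,True,True,True,False,False,False],
  [True,False,False,True,True,False,True,True,False,False,True,True,True,False,True,False,True],
  [True,False,False,False,True,True,False,True,False,True,True,True,False,True,False,True,False],
  [False,False,True,False,True,True,False,True,True,False,False,True,False,False,True,False,False],
  [True,True,True,True,True,True,True,False,False,True,False,True,False,True,False,False,False]]"

definition B34 :: "bool list list" where
  "B34 = [[True,False,True,False,False,True,False,False,True,True,True,False,False,False,True,False,True],
  [False,True,False,False,True,True,False,False,False,True,True,True,True,True,True,False,True],
  [True,False,True,True,False,True,True,True,False,False,True,True,True,False,False,True,True],
  [False,False,True,False,True,True,True,True,True,True,False,False,True,True,True,True,True],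
  [False,True,False,True,False,False,True,True,True,True,False,True,False,True,True,False,True],
  [True,True,True,True,False,True,True,True,True,False,True,False,True,False,False,False,False],
  [False,False,True,True,True,True,True,False,False,False,True,False,False,True,True,False,True],
  [False,False,True,True,True,True,False,False,True,False,True,True,True,True,True,True,False],
  [True,False,False,True,True,True,False,True,False,True,False,False,True,True,True,False,False],
  [True,True,False,True,True,False,False,False,True,True,False,True,True,False,True,False,False],
  [True,True,True,False,False,True,True,True,False,False,True,False,False,True,True,True,True],
  [False,True,True,False,True,False,False,True,False,True,False,True,False,True,False,True,True],
  [False,True,True,True,False,True,False,True,True,True,False,False,True,True,False,False,True],
  [False,True,False,True,True,False,True,True,True,False,True,True,True,True,False,True,False],
  [True,True,False,True,True,False,True,True,True,True,True,False,False,False,True,False,True],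
  [False,False,True,True,False,False,False,True,False,False,True,True,False,True,False,False,False],
  [True,True,True,True,True,False,True,False,False,False,True,True,True,False,True,False,False]]"

definition M34 :: "bool list list" where
  "M34 = [[False,False,False,False,False,False,True,False,True,True,True,False,True,True,True,True,False],
  [False,True,True,False,True,True,False,False,False,True,True,True,True,True,False,False,True],
  [False,True,True,False,False,True,True,False,False,True,False,False,True,True,True,True,False],
  [False,False,False,True,False,False,False,False,True,True,False,True,True,True,False,False,True],
  [False,True,False,False,True,True,True,True,False,False,False,False,False,False,False,False,False],
  [False,True,True,False,True,True,True,False,True,True,False,False,True,False,True,False,True],
  [True,False,True,False,True,True,True,False,True,True,True,True,False,True,True,False,True],
  [False,False,False,False,True,False,False,False,True,False,False,False,True,False,True,True,False],
  [True,False,False,True,False,True,True,True,False,True,False,False,False,False,False,True,True],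
  [True,True,True,True,False,True,True,False,True,False,True,True,False,False,False,False,True],
  [True,True,False,False,False,False,True,False,False,True,False,False,True,False,True,False,False],
  [False,True,False,True,False,False,True,False,False,True,False,True,False,False,False,False,False],
  [True,True,True,True,False,True,False,True,False,False,True,False,False,False,True,True,True],
  [True,True,True,True,False,False,True,False,False,False,False,False,False,True,True,False,True],
  [True,False,True,False,False,True,True,True,False,False,True,False,True,True,True,True,False],
  [True,False,True,False,False,False,False,True,True,False,False,False,True,False,True,False,False],
  [False,True,False,True,False,True,True,False,True,True,False,False,True,True,False,False,True]]"

definition w34 :: "bool list" where
  "w34 = [False,True,False,False,False,False,False,False,False,True,False,False,False,False,False,False,False]"

lemma fsd_LCD_code_exists_34_17_7: "fsd_LCD_code_exists (17 + 17) 17 7"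
  by (rule fsd_LCD_code_exists_certified[where A = A34 and B = B34 and M = M34 and t = 3 and w = w34])
    (simp_all add: A34_def B34_def M34_def w34_def square_list_mat_def list_mat_mult_def
      list_mat_id_def list_mat_add_def upt_rec numeral_eq_Suc)

definition A36 :: "bool list list" where
  "A36 = [[True,False,True,False,False,False,False,False,False,True,False,True,True,True,True,False,False,True],
  [False,False,False,True,False,False,False,True,True,False,False,True,False,False,False,False,True,True],
  [True,False,False,False,True,False,True,True,True,True,False,True,False,False,True,True,False,True],
  [False,True,False,True,False,True,True,True,True,False,False,False,False,True,False,False,True,False],
  [False,False,True,False,False,False,True,False,False,False,True,True,True,True,False,True,False,False],
  [False,False,False,True,False,False,True,True,True,True,False,False,True,True,True,True,False,True],
  [False,False,True,True,True,True,True,False,True,False,False,True,False,False,False,True,False,True],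
  [False,True,True,True,False,True,False,True,True,True,False,False,False,False,False,False,True,True],
  [False,True,True,True,False,True,True,True,False,True,True,False,True,False,False,True,True,False],
  [True,False,True,False,False,True,False,True,True,True,True,True,False,True,False,False,True,False],
  [False,False,False,False,True,False,False,False,True,True,True,False,True,True,True,False,True,False],
  [True,True,True,False,True,False,True,False,False,True,False,False,False,True,True,False,False,False],
  [True,False,False,False,True,True,False,False,True,False,True,False,False,False,False,True,True,True],
  [True,False,False,True,True,True,False,False,False,True,True,True,False,True,True,False,False,False],
  [True,False,True,False,False,True,False,False,False,False,True,True,False,True,True,True,True,False],
  [False,False,True,False,True,True,True,False,True,False,False,False,True,False,True,False,False,True],
  [False,True,False,True,False,False,False,True,True,True,True,False,True,False,True,False,False,False],
  [True,True,True,False,False,True,True,True,False,False,False,False,True,False,False,True,False,True]]"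

definition B36 :: "bool list list" where
  "B36 = [[True,True,True,False,False,True,False,True,True,False,False,True,True,True,False,False,True,False],
  [True,True,True,False,True,False,False,False,True,True,False,False,False,False,True,True,False,False],
  [True,True,False,False,True,False,True,False,False,True,False,False,True,False,True,False,False,False],
  [False,False,False,True,False,True,False,False,False,False,True,True,False,False,False,False,True,True],
  [False,True,True,False,True,False,True,True,False,False,True,False,True,False,False,True,True,False],
  [True,False,False,True,False,False,True,True,True,True,True,True,True,True,False,True,True,True],
  [False,False,True,False,True,True,False,True,False,True,True,True,False,False,True,True,False,False],
  [True,False,False,False,True,True,True,False,True,False,False,False,True,True,False,True,False,True],
  [True,True,False,False,False,True,False,True,True,False,False,False,False,True,True,True,True,True],
  [False,True,True,False,False,True,True,False,False,False,True,True,False,True,False,True,False,True],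
  [False,False,False,True,True,True,True,False,False,True,True,False,False,False,True,False,True,False],
  [True,False,False,True,False,True,True,False,False,True,False,False,False,False,False,True,True,False],
  [True,False,True,False,True,True,False,True,False,False,False,False,True,True,False,True,True,False],
  [True,False,False,False,False,True,False,True,True,True,False,False,True,False,False,True,True,True],
  [False,True,True,False,False,False,True,False,True,False,True,False,False,False,True,True,True,False],
  [False,True,False,False,True,True,True,True,True,True,False,True,True,True,True,False,False,True],
  [True,False,False,True,True,True,False,False,True,False,True,True,True,True,True,False,False,True],
  [False,False,False,True,False,True,False,True,True,True,False,False,False,True,False,True,True,False]]"

definition M36 :: "bool list list" where
  "M36 = [[True,True,False,True,False,False,True,True,True,False,False,False,True,False,False,True,False,False],
  [True,False,True,False,True,True,True,False,True,True,False,False,False,True,False,True,True,True],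
  [False,True,False,True,False,False,True,False,True,True,True,True,False,True,False,True,False,False],
  [True,False,True,True,False,False,True,False,True,False,True,True,False,False,True,True,True,True],
  [False,True,False,False,True,True,False,False,True,True,True,True,True,False,False,True,False,False],
  [False,True,False,False,True,True,True,True,False,False,True,True,True,False,False,False,False,False],
  [True,True,True,True,False,True,True,False,False,False,True,True,False,False,True,True,True,False],
  [True,False,False,False,False,True,False,True,True,True,False,False,True,True,True,False,True,True],
  [True,True,True,True,True,False,False,True,True,False,False,True,True,True,False,False,True,True],
  [False,True,True,False,True,False,False,True,False,True,False,True,True,False,False,False,False,True],
  [False,False,True,True,True,True,True,False,False,False,True,True,False,False,False,True,True,False],
  [False,False,True,True,True,True,True,False,True,True,True,True,False,False,True,True,False,True],
  [True,False,False,False,True,True,False,True,True,True,False,False,True,True,False,True,False,True],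
  [False,True,True,False,False,False,False,True,True,False,False,False,True,False,True,True,False,True],
  [False,False,False,True,False,False,True,True,False,False,False,True,False,True,False,True,True,False],
  [True,True,True,True,True,False,True,False,False,False,True,True,True,True,True,False,True,True],
  [False,True,False,True,False,False,True,True,True,False,True,False,False,False,True,True,True,False],
  [False,True,False,True,False,False,False,True,True,True,False,True,True,True,False,True,False,False]]"

definition w36 :: "bool list" where
  "w36 = [False,True,False,False,False,False,False,False,False,False,False,False,False,False,False,False,False,False]"

lemma fsd_LCD_code_exists_36_18_7: "fsd_LCD_code_exists (18 + 18) 18 7"
  by (rule fsd_LCD_code_exists_certified[where A = A36 and B = B36 and M = M36 and t = 3 and w = w36])
    (simp_all add: A36_def B36_def M36_def w36_def square_list_mat_def list_mat_mult_def
      list_mat_id_def list_mat_add_def upt_rec numeral_eq_Suc)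

definition A38 :: "bool list list" where
  "A38 = [[True,False,False,False,True,True,False,False,True,True,True,False,False,False,False,True,False,True,True],
  [False,True,True,True,False,False,True,True,False,True,True,True,False,True,True,True,True,False,True],
  [False,True,True,True,True,True,False,True,False,True,False,False,False,False,False,False,True,True,True],
  [False,True,True,False,True,False,True,True,False,False,False,True,True,False,False,False,False,True,False],
  [True,False,True,True,False,True,False,True,False,True,True,True,False,True,True,False,True,False,False],
  [True,False,True,False,True,False,False,True,True,False,True,False,False,True,True,True,True,True,True],
  [False,True,False,True,False,False,True,False,False,True,True,True,True,False,False,True,False,True,True],
  [False,True,True,True,True,True,False,False,True,False,False,False,True,False,False,False,True,False,False],
  [True,False,False,False,False,True,False,True,False,False,False,True,True,False,False,False,False,True,False],
  [True,True,True,False,True,False,True,False,False,True,False,True,False,True,True,True,False,False,False],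
  [True,True,False,False,True,True,True,False,False,False,True,True,True,False,False,True,True,False,True],
  [False,True,False,True,True,False,True,False,True,True,True,True,True,False,True,True,True,False,True],
  [False,False,False,True,False,False,True,True,True,False,True,True,True,True,False,False,False,True,True],
  [False,True,False,False,True,True,False,False,False,True,False,False,True,False,False,False,True,False,True],
  [False,True,False,False,True,True,False,False,False,True,False,True,False,False,True,True,True,True,True],
  [True,True,False,False,False,True,True,False,False,True,True,True,False,False,True,False,True,True,True],
  [False,True,True,False,True,True,False,True,False,False,True,True,False,True,True,True,False,False,False],
  [True,False,True,True,False,True,True,False,True,False,False,False,True,False,True,True,False,False,True],
  [True,True,True,False,False,True,True,False,False,False,True,True,True,True,True,True,False,True,False]]"

definition B38 :: "bool list list" where
  "B38 = [[True,False,False,True,True,True,True,True,True,False,False,True,False,True,False,True,False,False,False],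
  [False,True,False,False,False,True,False,True,True,True,True,True,False,True,True,True,True,True,False],
  [False,False,False,False,False,True,True,False,True,False,False,False,True,False,False,True,True,False,True],
  [True,False,False,True,False,False,False,True,True,False,False,False,True,True,True,True,True,True,False],
  [True,False,False,False,True,False,False,False,True,False,True,True,False,False,False,True,False,False,True],
  [True,True,True,False,False,True,False,False,True,True,True,True,True,True,False,False,True,False,True],
  [True,False,True,False,False,False,False,False,False,False,True,False,False,True,True,False,True,True,True],
  [True,True,False,True,False,False,False,True,True,False,False,False,False,False,True,True,False,False,True],
  [True,True,True,True,True,True,False,True,False,False,True,True,False,True,True,True,True,True,False],
  [False,True,False,False,False,True,False,False,False,True,True,True,True,True,False,True,True,True,True],
  [False,True,False,False,True,True,True,False,True,True,True,True,False,False,False,True,False,False,False],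
  [True,True,False,False,True,True,False,False,True,True,True,False,True,False,True,True,True,True,False],
  [False,False,True,True,False,True,False,False,False,True,False,True,True,False,True,False,False,True,True],
  [True,True,False,True,False,True,True,False,True,True,False,False,False,True,True,False,False,False,False],
  [False,True,False,True,False,False,True,True,True,False,False,True,True,True,False,False,False,True,False],
  [True,True,True,True,True,False,False,True,True,True,True,True,False,False,False,False,True,True,False],
  [False,True,True,True,False,True,True,False,True,True,False,True,False,False,False,True,True,False,False],
  [False,True,False,True,False,False,True,False,True,True,False,True,True,False,True,True,False,False,True],
  [False,False,True,False,True,True,True,True,False,True,False,False,True,False,False,False,False,True,False]]"

definition M38 :: "bool list list" where
  "M38 = [[False,True,False,False,False,True,False,True,True,False,False,False,True,False,True,True,True,True,True],
  [True,False,False,False,True,True,False,True,True,True,False,False,True,True,True,False,True,True,False],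
  [False,False,True,True,True,True,False,True,True,False,True,False,True,True,True,False,False,False,False],
  [False,False,True,False,True,True,False,False,False,False,True,True,False,True,True,True,True,True,True],
  [False,True,True,True,False,True,True,True,False,True,True,False,True,False,False,True,True,False,False],
  [True,True,True,True,True,True,False,False,False,False,True,False,True,True,True,True,False,True,True],
  [False,False,False,False,True,False,True,False,False,True,True,False,False,True,False,True,False,True,False],
  [True,True,True,False,True,False,False,True,True,True,False,False,False,False,False,False,False,False,True],
  [True,True,True,False,False,False,False,True,True,True,True,True,True,False,True,True,False,False,True],
  [False,True,False,False,True,False,True,True,True,True,False,True,True,True,False,True,True,False,True],
  [False,False,True,True,True,True,True,False,True,False,False,False,True,False,False,True,False,True,True],
  [False,False,False,True,False,False,False,False,True,True,False,False,False,False,True,False,True,True,False],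
  [True,True,True,False,True,True,False,False,True,True,True,False,False,True,True,False,False,False,True],
  [False,True,True,True,False,True,True,False,False,True,False,False,True,True,True,False,True,False,True],
  [True,True,True,True,False,True,False,False,True,False,False,True,True,True,True,True,False,False,True],
  [True,False,False,True,True,True,True,False,True,True,True,False,False,False,True,True,False,True,False],
  [True,True,False,True,True,False,False,False,False,True,False,True,False,True,False,False,True,True,True],
  [True,True,False,True,False,True,True,False,False,False,True,True,False,False,False,True,True,False,False],
  [True,False,False,True,False,True,False,True,True,True,True,False,True,True,True,False,True,False,True]]"

definition w38 :: "bool list" where
  "w38 = [False,False,False,False,False,False,False,False,True,False,False,False,False,False,False,False,False,False,False]"

lemma fsd_LCD_code_exists_38_19_7: "fsd_LCD_code_exists (19 + 19) 19 7"
  by (rule fsd_LCD_code_exists_certified[where A = A38 and B = B38 and M = M38 and t = 3 and w = w38])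
    (simp_all add: A38_def B38_def M38_def w38_def square_list_mat_def list_mat_mult_def
      list_mat_id_def list_mat_add_def upt_rec numeral_eq_Suc)

definition A40 :: "bool list list" where
  "A40 = [[True,True,True,True,False,False,True,True,False,False,False,False,True,False,True,False,True,False,True,True],
  [True,True,True,False,True,False,True,False,True,False,False,False,True,False,False,True,False,False,False,True],
  [True,True,True,False,True,False,True,True,False,True,True,True,True,False,False,False,False,False,True,True],
  [True,False,False,True,True,True,False,False,False,False,False,True,False,True,False,True,True,False,False,True],
  [False,True,True,True,False,False,False,True,True,True,True,False,True,True,False,False,False,True,True,False],
  [False,False,False,True,False,True,False,False,False,True,False,False,True,True,False,True,False,True,True,True],
  [True,True,True,False,False,False,False,False,False,False,True,False,True,True,True,False,True,False,False,True],
  [True,False,True,False,True,False,False,True,True,True,True,True,True,True,False,True,False,True,False,True],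
  [False,True,False,False,True,False,False,True,False,False,False,False,False,False,False,True,True,True,False,True],
  [False,False,True,False,True,True,False,True,False,False,False,True,True,True,False,True,True,True,True,False],
  [False,False,True,False,True,False,True,True,False,False,False,True,False,True,True,True,False,True,False,True],
  [False,False,True,True,False,False,False,True,False,True,True,False,False,True,False,False,True,False,False,False],
  [True,True,True,False,True,True,True,True,False,True,False,False,False,False,False,True,True,False,True,False],
  [False,False,False,True,True,True,True,True,False,True,True,True,False,True,False,True,True,False,False,False],
  [True,False,False,False,False,False,True,False,False,False,True,False,False,False,True,True,True,True,True,False],
  [False,True,False,True,False,True,False,True,True,True,True,False,True,True,True,True,True,True,False,False],
  [True,False,False,True,False,False,True,False,True,True,False,True,True,True,True,True,True,True,True,False],
  [False,False,False,False,True,True,False,True,True,True,True,False,False,False,True,True,True,False,False,True],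
  [True,False,True,False,True,True,False,False,False,True,False,False,True,False,True,False,True,False,True,False],
  [True,True,True,True,False,True,True,True,True,False,True,False,False,False,False,False,False,True,False,False]]"

definition B40 :: "bool list list" where
  "B40 = [[True,False,False,False,False,True,True,True,True,False,True,False,True,True,True,False,True,False,True,False],
  [False,False,True,False,True,True,False,False,False,False,False,True,True,False,True,False,True,False,False,False],
  [False,True,True,True,True,True,False,False,False,False,False,False,False,True,False,True,True,False,False,False],
  [False,False,True,False,True,False,True,True,True,False,False,True,True,True,True,False,True,False,True,True],
  [False,True,True,True,False,False,True,True,False,False,False,False,True,False,False,False,True,True,True,False],
  [True,True,True,False,False,False,True,True,False,False,False,True,False,True,False,True,True,True,True,True],
  [True,False,False,True,True,True,False,True,False,True,False,True,False,True,False,True,False,False,False,True],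
  [True,False,False,True,True,True,True,True,False,True,False,True,True,False,True,False,True,True,True,False],
  [True,False,False,True,False,False,False,False,True,True,False,True,True,True,False,True,True,True,False,False],
  [False,False,False,False,False,False,True,True,True,True,False,False,False,False,True,True,False,True,False,True],
  [True,False,False,False,False,False,False,False,False,False,True,True,False,False,True,True,True,False,True,False],
  [False,True,False,True,False,True,True,True,True,False,True,True,False,False,True,False,False,True,False,True],
  [True,True,False,True,True,False,False,True,True,False,False,False,True,True,True,True,True,True,True,False],
  [True,False,True,True,False,True,True,False,True,False,False,False,True,True,False,False,True,False,True,True],
  [True,True,False,True,False,False,False,True,False,True,True,True,True,False,False,True,False,True,True,False],
  [False,False,True,False,False,True,True,False,True,True,True,False,True,False,True,True,True,True,False,True],
  [True,True,True,True,True,True,False,True,True,False,True,False,True,True,False,True,True,False,False,True],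
  [False,False,False,False,True,True,False,True,True,True,False,True,True,False,True,True,False,True,True,False],
  [True,False,False,True,True,True,False,True,False,False,True,False,True,True,True,False,False,True,False,True],
  [False,False,False,True,False,True,True,False,False,True,False,True,False,True,False,True,True,False,True,False]]"

definition M40 :: "bool list list" where
  "M40 = [[True,False,False,True,False,True,False,False,True,False,True,False,True,True,False,False,True,False,True,False],
  [False,False,True,False,True,False,False,True,False,True,True,False,True,False,True,False,True,True,False,False],
  [False,True,True,True,False,False,True,True,False,False,True,True,False,False,False,True,True,True,False,False],
  [True,False,True,False,True,False,True,False,False,False,True,False,True,True,True,False,False,False,True,True],
  [False,True,False,True,False,False,True,True,True,True,True,True,False,False,False,True,False,True,False,False],
  [True,False,False,False,False,True,False,True,True,False,True,True,False,False,False,True,False,False,True,False],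
  [False,False,True,True,True,False,True,False,True,True,False,True,True,True,False,True,True,True,True,True],
  [False,True,True,False,True,True,False,False,False,False,False,False,False,True,False,True,False,False,False,True],
  [True,False,False,False,True,True,True,False,False,True,False,False,False,False,False,True,False,False,True,False],
  [False,True,False,False,True,False,True,False,True,False,True,True,False,False,True,True,True,True,False,True],
  [True,True,True,True,True,True,False,False,False,True,True,False,True,True,False,True,True,False,False,True],
  [False,False,True,False,True,True,True,False,False,True,False,True,False,False,False,False,False,False,False,False],
  [True,True,False,True,False,False,True,False,False,False,True,False,False,True,False,True,False,False,True,True],
  [True,False,False,True,False,False,True,True,False,False,True,False,True,False,False,True,False,False,True,True],
  [False,True,False,True,False,False,False,False,False,True,False,False,False,False,False,False,True,True,False,True],
  [False,False,True,False,True,True,True,True,True,True,True,False,True,True,False,True,True,False,True,True],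
  [True,True,True,False,False,False,True,False,False,True,True,False,False,False,True,True,False,True,False,False],
  [False,True,True,False,True,False,True,False,False,True,False,False,False,False,True,False,True,True,True,False],
  [True,False,False,True,False,True,True,False,True,False,False,False,True,True,False,True,False,True,False,True],
  [False,False,False,True,False,False,True,True,False,True,True,False,True,True,True,True,False,False,True,True]]"

definition w40 :: "bool list" where
  "w40 = [False,False,False,False,False,False,False,False,True,False,False,False,False,False,False,False,False,False,False,False]"

lemma fsd_LCD_code_exists_40_20_8: "fsd_LCD_code_exists (20 + 20) 20 8"
  by (rule fsd_LCD_code_exists_certified[where A = A40 and B = B40 and M = M40 and t = 3 and w = w40])
    (simp_all add: A40_def B40_def M40_def w40_def square_list_mat_def list_mat_mult_def
      list_mat_id_def list_mat_add_def upt_rec numeral_eq_Suc)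

definition A50 :: "bool list list" where
  "A50 = [[True,True,False,True,False,True,False,True,False,False,True,False,True,False,False,False,True,True,False,False,True,False,True,False,True],
  [True,True,False,False,False,False,False,False,True,True,True,False,False,True,True,False,False,False,False,False,True,True,True,True,True],
  [False,False,False,True,False,True,True,True,True,True,True,True,True,False,True,True,False,False,False,True,False,False,True,True,True],
  [True,False,True,True,True,False,False,False,True,False,True,True,False,False,True,False,False,True,False,False,True,False,False,False,False],
  [False,False,False,True,False,False,False,True,True,True,False,False,True,False,False,True,False,True,False,True,False,False,False,True,False],
  [True,False,True,False,False,False,True,False,False,False,False,True,False,False,True,False,True,True,True,True,False,False,True,False,True],
  [False,False,True,False,False,True,True,True,True,False,True,True,True,True,False,False,False,False,True,False,False,False,True,False,False],
  [True,False,True,False,True,False,True,False,False,False,True,False,False,False,True,True,True,False,True,False,False,False,False,False,True],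
  [False,True,True,True,True,False,True,False,False,False,True,True,True,False,True,True,True,True,True,False,False,True,False,False,True],
  [False,True,True,False,True,False,False,False,False,True,True,False,False,False,False,False,True,False,True,False,False,True,True,False,False],
  [True,True,True,True,False,False,True,True,True,True,False,True,True,True,True,False,False,False,False,False,True,False,False,False,False],
  [False,False,True,True,False,True,True,False,True,False,True,True,False,False,False,False,False,False,False,False,True,True,False,False,False],
  [True,False,True,False,True,False,True,False,True,False,True,False,True,False,True,True,True,False,False,True,True,False,True,False,False],
  [False,True,False,False,False,False,True,False,False,False,True,False,False,False,True,False,False,True,True,True,True,True,False,True,True],
  [False,True,True,True,False,True,False,True,True,False,True,False,True,True,False,False,True,False,False,False,False,False,False,False,True],
  [False,False,True,False,True,False,False,True,True,False,False,False,True,False,False,False,True,True,False,False,False,False,True,False,False],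
  [True,False,False,False,False,True,False,True,True,True,False,False,True,False,True,True,True,True,False,False,True,False,True,False,True],
  [True,False,False,True,True,True,False,False,True,False,False,False,False,True,False,True,True,False,False,False,True,False,True,True,False],
  [False,False,False,False,False,True,True,True,True,True,False,False,False,True,False,False,False,False,True,False,True,False,False,True,True],
  [False,False,True,False,True,True,False,False,False,False,False,False,True,True,False,False,False,False,False,True,True,True,True,True,False],
  [True,True,False,True,False,False,False,False,False,False,True,True,True,True,False,False,True,True,True,True,False,True,True,False,False],
  [False,True,False,False,False,False,False,False,True,True,False,True,False,True,False,False,False,False,False,True,True,False,False,True,False],
  [True,True,True,False,False,True,True,False,False,True,False,False,True,False,False,True,True,True,False,True,True,False,False,False,True],
  [False,True,True,False,True,False,False,False,False,False,False,False,False,True,False,False,False,True,True,True,False,True,False,True,True],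
  [True,True,True,False,False,True,False,True,True,False,False,False,False,True,True,False,True,False,True,False,False,False,True,True,True]]"

definition B50 :: "bool list list" where
  "B50 = [[True,False,True,True,False,True,True,True,True,False,False,False,False,True,True,False,False,True,False,True,False,True,False,True,False],
  [False,True,False,True,False,True,True,False,True,False,False,True,False,True,True,False,False,True,True,False,True,False,False,True,True],
  [True,False,True,True,False,True,True,False,True,True,False,False,False,False,True,False,False,False,False,False,True,False,False,True,False],
  [True,True,True,False,True,True,True,False,True,False,True,False,True,True,False,True,True,True,True,False,True,False,False,False,False],
  [False,False,False,True,True,False,True,True,False,True,False,False,False,True,True,True,True,True,True,True,False,False,False,True,False],
  [True,True,True,True,False,True,True,False,True,False,False,True,True,False,False,True,False,True,False,False,False,False,False,True,False],
  [True,True,True,True,True,True,True,True,False,False,True,True,True,False,True,False,True,False,True,False,True,True,True,True,False],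
  [True,False,False,False,True,False,True,False,True,True,False,False,False,True,True,True,True,False,False,False,False,False,True,True,True],
  [True,True,True,True,False,True,False,True,False,False,False,True,True,True,False,False,False,False,True,False,False,False,True,True,True],
  [False,False,True,False,True,False,False,True,False,True,True,False,False,False,True,True,False,False,False,False,False,False,True,True,True],
  [False,False,False,True,False,False,True,False,False,True,False,False,True,True,True,True,True,True,False,True,True,True,True,False,False],
  [False,True,False,False,False,True,True,False,True,False,False,True,True,True,False,False,False,False,False,True,False,True,False,True,True],
  [False,False,False,True,False,True,True,False,True,False,True,True,False,True,False,True,False,True,False,False,True,True,False,False,True],
  [True,True,False,True,True,False,False,True,True,False,True,True,True,True,True,True,False,False,False,False,True,True,False,True,True],
  [True,True,True,False,True,False,True,True,False,True,True,False,False,True,True,False,True,True,False,False,False,True,True,True,True],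
  [False,False,False,True,True,True,False,True,False,True,True,False,True,True,False,True,False,False,True,True,True,False,False,False,False],
  [False,False,False,True,True,False,True,True,False,False,True,False,False,False,True,False,False,False,True,False,False,True,False,False,True],
  [True,True,False,True,True,True,False,False,False,False,True,False,True,False,True,False,False,False,True,False,True,False,False,False,True],
  [False,True,False,True,True,False,True,False,True,False,False,False,False,False,False,True,True,True,False,True,False,True,False,True,False],
  [True,False,False,False,True,False,False,False,False,False,True,True,False,False,False,True,False,False,True,True,False,False,True,False,True],
  [False,True,True,True,False,False,True,False,False,False,True,False,True,True,False,True,False,True,False,False,False,False,True,False,False],
  [True,False,False,False,False,False,True,False,False,False,True,True,True,True,True,False,True,False,True,False,False,True,False,True,False],
  [False,False,False,False,False,False,True,True,True,True,True,False,False,False,True,False,False,False,False,True,True,False,False,False,True],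
  [True,True,True,False,True,True,True,True,True,True,False,True,False,True,True,False,False,False,True,False,False,True,False,True,False],
  [False,True,False,False,False,False,False,True,True,True,False,True,True,True,True,False,True,True,False,True,False,False,True,False,False]]"

definition M50 :: "bool list list" where
  "M50 = [[True,False,True,False,True,True,False,True,False,False,True,False,True,True,True,True,True,True,True,True,False,False,True,False,True],
  [False,True,False,True,True,True,True,False,True,True,False,False,True,False,True,False,False,True,True,False,False,True,False,True,True],
  [True,False,False,False,True,False,False,False,False,True,True,False,False,True,True,False,True,False,False,True,False,False,True,False,True],
  [False,True,False,False,True,True,False,True,False,False,False,True,True,True,False,True,True,False,True,False,True,True,True,True,True],
  [True,True,True,True,True,False,True,True,False,True,True,True,False,False,True,False,True,True,True,True,False,True,True,False,True],
  [True,True,False,True,False,False,False,False,False,False,True,True,False,False,False,False,True,False,True,False,True,False,False,False,True],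
  [False,True,False,False,True,False,True,True,False,False,False,False,True,True,False,False,False,False,True,False,False,True,False,True,True],
  [True,False,False,True,True,False,True,True,True,True,False,False,True,True,True,False,False,False,True,False,False,True,False,False,True],
  [False,True,False,False,False,False,False,True,True,True,True,True,True,True,False,False,False,False,True,True,False,True,False,False,False],
  [False,True,True,False,True,False,False,True,True,True,True,True,True,True,True,True,False,True,False,False,True,True,True,True,True],
  [True,False,True,False,True,True,False,False,True,True,False,True,True,True,False,True,False,True,False,True,False,False,True,True,True],
  [False,False,False,True,True,True,False,False,True,True,True,True,False,False,True,True,False,True,True,False,True,True,True,True,True],
  [True,True,False,True,False,False,True,True,True,True,True,False,False,True,False,False,True,False,False,True,False,True,False,False,False],
  [True,False,True,True,False,False,True,True,True,True,True,False,True,True,True,False,True,False,True,True,False,True,False,True,False],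
  [True,True,True,False,True,False,False,True,False,True,False,True,False,True,True,False,False,False,False,False,False,True,True,True,False],
  [True,False,False,True,False,False,False,False,False,True,True,True,False,False,False,False,True,True,False,True,False,True,True,False,True],
  [True,False,True,True,True,True,False,False,False,False,False,False,True,True,False,True,True,False,True,True,False,False,False,False,True],
  [True,True,False,False,True,False,False,False,False,True,True,True,False,False,False,True,False,False,False,False,False,False,True,True,True],
  [True,True,False,True,True,True,True,True,True,False,False,True,False,True,False,False,True,False,False,False,False,False,False,False,True],
  [True,False,True,False,True,False,False,False,True,False,True,False,True,True,False,True,True,False,False,False,True,False,False,False,False],
  [False,False,False,True,False,True,False,False,False,True,False,True,False,False,False,False,False,False,False,True,False,False,True,False,False],
  [False,True,False,True,True,False,True,True,True,True,False,True,True,True,True,True,False,False,False,False,False,True,True,False,True],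
  [True,False,True,True,True,False,False,False,False,True,True,True,False,False,True,True,False,True,False,False,True,True,True,True,True],
  [False,True,False,True,False,False,True,False,False,True,True,True,False,True,True,False,False,True,False,False,False,False,True,True,False],
  [True,True,True,True,True,True,True,True,False,True,True,True,False,False,False,True,True,True,True,False,False,True,True,False,True]]"

definition w50 :: "bool list" where
  "w50 = [False,False,False,False,False,False,False,False,False,False,False,False,False,False,False,True,False,False,False,False,False,False,False,False,False]"

lemma fsd_LCD_code_exists_50_25_9: "fsd_LCD_code_exists (25 + 25) 25 9"
  by (rule fsd_LCD_code_exists_certified[where A = A50 and B = B50 and M = M50 and t = 4 and w = w50])
    (simp_all add: A50_def B50_def M50_def w50_def square_list_mat_def list_mat_mult_def
      list_mat_id_def list_mat_add_def upt_rec numeral_eq_Suc)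

theorem theorem6:
  shows "(\<forall>n1 n2 s::nat. 2 * n1 \<in> {24, 26, 28, 30, 32} \<longrightarrow> 2 * n2 \<in> {34, 36, 38} \<longrightarrow> s \<ge> 1 \<longrightarrow>
            fsd_LCD_code_exists (4 * s * n1) (2 * s * n1) 6 \<and>
            fsd_LCD_code_exists (4 * s * n2) (2 * s * n2) 7)
       \<and> (\<forall>s::nat. s \<ge> 1 \<longrightarrow>
            fsd_LCD_code_exists (44 * s) (22 * s) 5 \<and>
            fsd_LCD_code_exists (80 * s) (40 * s) 8 \<and>
            fsd_LCD_code_exists (100 * s) (50 * s) 9)"
proof (intro conjI allI impI)
  fix n1 n2 s :: nat
  assume n1: "2 * n1 \<in> {24, 26, 28, 30, 32}" and n2: "2 * n2 \<in> {34, 36, 38}" and "s \<ge> 1"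
  then have s: "0 < s"
    by simp
  from n1 have "n1 \<in> {12, 13, 14, 15, 16}"
    by auto
  then show "fsd_LCD_code_exists (4 * s * n1) (2 * s * n1) 6"
    using fsd_LCD_code_exists_24_12_6 fsd_LCD_code_exists_26_13_6 fsd_LCD_code_exists_28_14_6
      fsd_LCD_code_exists_30_15_6 fsd_LCD_code_exists_32_16_6
    by (auto intro: fsd_LCD_code_exists_scaled[OF _ s])
  from n2 have "n2 \<in> {17, 18, 19}"
    by auto
  then show "fsd_LCD_code_exists (4 * s * n2) (2 * s * n2) 7"
    using fsd_LCD_code_exists_34_17_7 fsd_LCD_code_exists_36_18_7 fsd_LCD_code_exists_38_19_7
    by (auto intro: fsd_LCD_code_exists_scaled[OF _ s])
next
  fix s :: nat
  assume "s \<ge> 1"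
  then have s: "0 < s"
    by simp
  show "fsd_LCD_code_exists (44 * s) (22 * s) 5"
    using fsd_LCD_code_exists_scaled[OF fsd_LCD_code_exists_22_11_5 s] by (simp add: mult.commute)
  show "fsd_LCD_code_exists (80 * s) (40 * s) 8"
    using fsd_LCD_code_exists_scaled[OF fsd_LCD_code_exists_40_20_8 s] by (simp add: mult.commute)
  show "fsd_LCD_code_exists (100 * s) (50 * s) 9"
    using fsd_LCD_code_exists_scaled[OF fsd_LCD_code_exists_50_25_9 s] by (simp add: mult.commute)
qed

end
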